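(* Let $\Omega\subset\mathbb{R}^n$ be an open bounded connected domain satisfying $\operatorname{Cut}(\Omega)=M(\Omega)$. Then the function $$\phi_\Omega(x)=c_0\left[\rho_\Omega^{4/3}-(\rho_\Omega-d_{\partial\Omega}(x))^{4/3}\right],\qquad c_0=\frac{3^{4/3}}{4},\quad x\in\overline\Omega,$$ is the unique viscosity solution to the Dirichlet problem $$-\Delta_\infty u=1\ \text{in }\Omega,\qquad u=0\ \text{on }\partial\Omega.$$ Moreover, if $\partial\Omega$ is of class $C^1$, then $\phi_\Omega$ is also the unique viscosity solution to the overdetermined problem $$-\Delta_\infty u=1\ \text{in }\Omega,\qquad u=0\ \text{on }\partial\Omega,\qquad \frac{\partial u}{\partial\nu}=c\ \text{on }\partial\Omega,$$ with $c=(3\rho_\Omega)^{1/3}$, where $\nu$ is the unit inner normal to $\partial\Omega$.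
   Context: $d_{\partial\Omega}(x)=\min_{y\in\partial\Omega}|x-y|$ for $x\in\overline\Omega$; $\rho_\Omega=\max_{\overline\Omega}d_{\partial\Omega}$. The singular set $\Sigma(\Omega)$ is the set of points of $\Omega$ where $d_{\partial\Omega}$ is not differentiable; the cut locus is $\operatorname{Cut}(\Omega)=\overline{\Sigma(\Omega)}$; the high ridge is $M(\Omega)=\{x\in\overline\Omega: d_{\partial\Omega}(x)=\rho_\Omega\}$. The infinity Laplacian is $\Delta_\infty\varphi=\langle D^2\varphi\,\nabla\varphi,\nabla\varphi\rangle$. A function $u\in C^0(\Omega)$ is a viscosity subsolution of $-\Delta_\infty u=1$ if $-\Delta_\infty\varphi(x_0)\le 1$ whenever $\varphi\in C^2(\Omega)$ and $\varphi-u$ has a local minimum at $x_0$; a viscosity supersolution if $-\Delta_\infty\varphi(x_0)\ge1$ whenever $\varphi\in C^2(\Omega)$ and $\varphi-u$ has a local maximum at $x_0$; a viscosity solution if both. A viscosity solution of the Dirichlet problem is $u\in C^0(\overline\Omega)$ with $u=0$ on $\partial\Omega$ that is a viscosity solution of the equation in $\Omega$. *)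

theory Defs
  imports "HOL-Analysis.Analysis"
begin

definition dist_bd :: "('a::euclidean_space) set \<Rightarrow> 'a \<Rightarrow> real" where
  "dist_bd \<Omega> x = infdist x (frontier \<Omega>)"

definition inradius :: "('a::euclidean_space) set \<Rightarrow> real" where
  "inradius \<Omega> = Sup (dist_bd \<Omega> ` closure \<Omega>)"

definition singular_set :: "('a::euclidean_space) set \<Rightarrow> 'a set" where
  "singular_set \<Omega> = {x \<in> \<Omega>. \<not> (dist_bd \<Omega> differentiable (at x))}"

definition cut_locus :: "('a::euclidean_space) set \<Rightarrow> 'a set" where
  "cut_locus \<Omega> = closure (singular_set \<Omega>)"

definition high_ridge :: "('a::euclidean_space) set \<Rightarrow> 'a set" where
  "high_ridge \<Omega> = {x \<in> closure \<Omega>. dist_bd \<Omega> x = inradius \<Omega>}"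

definition C2_on :: "('a::euclidean_space) set \<Rightarrow> ('a \<Rightarrow> real) \<Rightarrow> ('a \<Rightarrow> 'a) \<Rightarrow> ('a \<Rightarrow> 'a \<Rightarrow> 'a) \<Rightarrow> bool" where
  "C2_on \<Omega> \<phi> g H \<longleftrightarrow>
     (\<forall>x\<in>\<Omega>. (\<phi> has_derivative (\<lambda>h. g x \<bullet> h)) (at x)) \<and>
     (\<forall>x\<in>\<Omega>. (g has_derivative H x) (at x)) \<and>
     (\<forall>h. continuous_on \<Omega> (\<lambda>x. H x h))"

definition inf_lap :: "('a::euclidean_space \<Rightarrow> 'a) \<Rightarrow> ('a \<Rightarrow> 'a \<Rightarrow> 'a) \<Rightarrow> 'a \<Rightarrow> real" where
  "inf_lap g H x = H x (g x) \<bullet> g x"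

definition local_min_at :: "('a::euclidean_space) set \<Rightarrow> ('a \<Rightarrow> real) \<Rightarrow> 'a \<Rightarrow> bool" where
  "local_min_at \<Omega> f x0 \<longleftrightarrow> (\<exists>e>0. \<forall>y\<in>\<Omega> \<inter> ball x0 e. f x0 \<le> f y)"

definition local_max_at :: "('a::euclidean_space) set \<Rightarrow> ('a \<Rightarrow> real) \<Rightarrow> 'a \<Rightarrow> bool" where
  "local_max_at \<Omega> f x0 \<longleftrightarrow> (\<exists>e>0. \<forall>y\<in>\<Omega> \<inter> ball x0 e. f y \<le> f x0)"

definition visc_subsol :: "('a::euclidean_space) set \<Rightarrow> ('a \<Rightarrow> real) \<Rightarrow> bool" where
  "visc_subsol \<Omega> u \<longleftrightarrow> continuous_on \<Omega> u \<and>
     (\<forall>\<phi> g H x0. C2_on \<Omega> \<phi> g H \<and> x0 \<in> \<Omega> \<and> local_min_at \<Omega> (\<lambda>x. \<phi> x - u x) x0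
        \<longrightarrow> - inf_lap g H x0 \<le> 1)"

definition visc_supersol :: "('a::euclidean_space) set \<Rightarrow> ('a \<Rightarrow> real) \<Rightarrow> bool" where
  "visc_supersol \<Omega> u \<longleftrightarrow> continuous_on \<Omega> u \<and>
     (\<forall>\<phi> g H x0. C2_on \<Omega> \<phi> g H \<and> x0 \<in> \<Omega> \<and> local_max_at \<Omega> (\<lambda>x. \<phi> x - u x) x0
        \<longrightarrow> - inf_lap g H x0 \<ge> 1)"

definition visc_sol :: "('a::euclidean_space) set \<Rightarrow> ('a \<Rightarrow> real) \<Rightarrow> bool" where
  "visc_sol \<Omega> u \<longleftrightarrow> visc_subsol \<Omega> u \<and> visc_supersol \<Omega> u"

definition dirichlet_visc_sol :: "('a::euclidean_space) set \<Rightarrow> ('a \<Rightarrow> real) \<Rightarrow> bool" where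
  "dirichlet_visc_sol \<Omega> u \<longleftrightarrow> continuous_on (closure \<Omega>) u \<and> (\<forall>x\<in>frontier \<Omega>. u x = 0) \<and> visc_sol \<Omega> u"

text \<open>nu is the unit inner normal of Omega at the boundary point p, witnessed by a local C^1
  defining function psi with non-vanishing gradient: near p, Omega = {psi > 0}.\<close>
definition inner_normal :: "('a::euclidean_space) set \<Rightarrow> 'a \<Rightarrow> 'a \<Rightarrow> bool" where
  "inner_normal \<Omega> p \<nu> \<longleftrightarrow> p \<in> frontier \<Omega> \<and>
     (\<exists>r>0. \<exists>\<psi> D\<psi>.
        (\<forall>x\<in>ball p r. (\<psi> has_derivative (\<lambda>h. D\<psi> x \<bullet> h)) (at x)) \<and>
        continuous_on (ball p r) D\<psi> \<and>
        (\<forall>x\<in>ball p r. D\<psi> x \<noteq> 0) \<and>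
        \<Omega> \<inter> ball p r = {x \<in> ball p r. \<psi> x > 0} \<and>
        \<nu> = D\<psi> p /\<^sub>R norm (D\<psi> p))"

definition C1_boundary :: "('a::euclidean_space) set \<Rightarrow> bool" where
  "C1_boundary \<Omega> \<longleftrightarrow> (\<forall>p\<in>frontier \<Omega>. \<exists>\<nu>. inner_normal \<Omega> p \<nu>)"

definition normal_deriv_eq :: "('a::euclidean_space) set \<Rightarrow> ('a \<Rightarrow> real) \<Rightarrow> real \<Rightarrow> bool" where
  "normal_deriv_eq \<Omega> u c \<longleftrightarrow> (\<forall>p \<nu>. inner_normal \<Omega> p \<nu> \<longrightarrow>
      ((\<lambda>t. (u (p + t *\<^sub>R \<nu>) - u p) / t) \<longlongrightarrow> c) (at_right 0))"

definition overdet_visc_sol :: "('a::euclidean_space) set \<Rightarrow> ('a \<Rightarrow> real) \<Rightarrow> real \<Rightarrow> bool" where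
  "overdet_visc_sol \<Omega> u c \<longleftrightarrow> dirichlet_visc_sol \<Omega> u \<and> normal_deriv_eq \<Omega> u c"

definition phi_Omega :: "('a::euclidean_space) set \<Rightarrow> 'a \<Rightarrow> real" where
  "phi_Omega \<Omega> x = (3 powr (4/3) / 4) *
      (inradius \<Omega> powr (4/3) - (inradius \<Omega> - dist_bd \<Omega> x) powr (4/3))"

end

theory Submission
  imports Defs
begin

(*
  With g = prof \<rho> the solution is \<phi>\<^sub>\<Omega> = g \<circ> d, and g solves the one-dimensional equation
  -(g')\<^sup>2 g'' = 1. Below the high ridge d is differentiable (the cut locus lies in the ridge),
  with gradient the unit vector pointing away from the nearest boundary point, and d grows with
  slope one along that segment; so a C\<^sup>2 function touching g \<circ> d at such a point sees exactly
  the one-dimensional equation. At a ridge point g \<circ> d has a maximum from which it falls off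
  like |x - x0|\<^sup>4\<^sup>/\<^sup>3: flat enough to force a zero gradient for test functions from below,
  too steep for a C\<^sup>2 function to touch from above.

  Uniqueness is proved by comparison with radial profiles. A solution u lies below
  \<kappa> prof R \<circ> d for \<kappa> > 1, R > \<rho>: at an interior maximum of the difference, the strict
  supersolution \<kappa> prof R (|x - y|), y a nearest boundary point, would touch u from above.
  Dually, around suitable centers c near a ridge point u lies above the strict subsolutions
  \<mu> prof R (R - |x - c|), \<mu> < 1; otherwise u (x) \<ge> u (c) - K |x - c|\<^sup>4\<^sup>/\<^sup>3 for all nearby
  x and c, so u would be locally constant, while supersolutions have no local minima. Every x lies at
  distance \<rho> - d x from a ridge point z, on the prolongation of the segment from its nearest
  boundary point (the segment can be prolonged off the cut locus, by Brouwer's fixed point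
  theorem); the barrier around a center near z then gives u x \<ge> g (d x).

  Finally d (p + t \<nu>) = t + o(t) along an inner normal, so the normal derivative is
  g'(0) = (3\<rho>)\<^sup>1\<^sup>/\<^sup>3.
*)

section \<open>The one-dimensional profile\<close>

definition prof_const :: real where "prof_const = 3 powr (4/3) / 4"

definition prof :: "real \<Rightarrow> real \<Rightarrow> real" where
  "prof R t = prof_const * (R powr (4/3) - (R - t) powr (4/3))"

definition prof_deriv :: "real \<Rightarrow> real \<Rightarrow> real" where
  "prof_deriv R t = prof_const * (4/3) * (R - t) powr (1/3)"

definition prof_deriv2 :: "real \<Rightarrow> real \<Rightarrow> real" where
  "prof_deriv2 R t = - (prof_const * (4/9) * (R - t) powr (-2/3))"

lemma prof_const_pos: "prof_const > 0"
  by (simp add: prof_const_def)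

lemma prof_const_cube: "prof_const ^ 3 = 81/64"
proof -
  have "(3 powr (4/3) :: real) ^ 3 = 3 powr (4/3 * 3)"
    by (simp add: powr_realpow[symmetric] powr_powr)
  then show ?thesis by (simp add: prof_const_def power_divide)
qed

lemma prof_zero [simp]: "prof R 0 = 0"
  by (simp add: prof_def)

lemma prof_top: "prof R R = prof_const * R powr (4/3)"
  by (simp add: prof_def)

lemma prof_has_derivative: "t < R \<Longrightarrow> (prof R has_real_derivative prof_deriv R t) (at t)"
  unfolding prof_def[abs_def] prof_deriv_def
  by (auto intro!: derivative_eq_intros DERIV_fun_powr simp: algebra_simps)

lemma prof_deriv_has_derivative:
  "t < R \<Longrightarrow> (prof_deriv R has_real_derivative prof_deriv2 R t) (at t)"
  unfolding prof_deriv_def[abs_def] prof_deriv2_def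
  by (auto intro!: derivative_eq_intros DERIV_fun_powr simp: algebra_simps)

text \<open>The ODE \<open>-(g')\<^sup>2 g'' = 1\<close>: since \<open>\<Delta>\<^sub>\<infinity> (g \<circ> d) = (g' \<circ> d)\<^sup>2 (g'' \<circ> d)\<close> wherever
  \<open>|\<nabla>d| = 1\<close> and \<open>d\<close> is differentiable, this is what makes \<open>prof \<rho> \<circ> d\<close> a solution.\<close>
lemma prof_ode: "t < R \<Longrightarrow> (prof_deriv R t)\<^sup>2 * prof_deriv2 R t = -1"
proof -
  assume "t < R"
  then have "((R - t) powr (1/3))\<^sup>2 * (R - t) powr (-2/3) = 1"
    by (simp add: power2_eq_square powr_add[symmetric])
  moreover have "(prof_deriv R t)\<^sup>2 * prof_deriv2 R t
      = - (prof_const ^ 3 * (64/81)) * (((R - t) powr (1/3))\<^sup>2 * (R - t) powr (-2/3))"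
    by (simp add: prof_deriv_def prof_deriv2_def power2_eq_square power3_eq_cube)
  ultimately show ?thesis by (simp add: prof_const_cube)
qed

lemma prof_shift_has_derivative:
  assumes "c + s < R"
  shows "((\<lambda>s. prof R (c + s)) has_real_derivative prof_deriv R (c + s)) (at s)"
proof -
  have "((\<lambda>s. c + s) has_real_derivative 1) (at s)" by (auto intro!: derivative_eq_intros)
  from DERIV_chain2[OF prof_has_derivative[OF assms] this] show ?thesis by simp
qed

lemma prof_deriv_shift_has_derivative:
  assumes "c + s < R"
  shows "((\<lambda>s. prof_deriv R (c + s)) has_real_derivative prof_deriv2 R (c + s)) (at s)"
proof -
  have "((\<lambda>s. c + s) has_real_derivative 1) (at s)" by (auto intro!: derivative_eq_intros)
  from DERIV_chain2[OF prof_deriv_has_derivative[OF assms] this] show ?thesis by simp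
qed

lemma prof_mono: "t \<le> t' \<Longrightarrow> t' \<le> R \<Longrightarrow> prof R t \<le> prof R t'"
  unfolding prof_def using prof_const_pos by (auto intro!: mult_left_mono powr_mono2)

lemma prof_reflect_has_derivative:
  assumes "r > 0"
  shows "((\<lambda>r. prof R (R - r)) has_real_derivative - prof_deriv R (R - r)) (at r)"
proof -
  have "((\<lambda>r. R - r) has_real_derivative -1) (at r)" by (auto intro!: derivative_eq_intros)
  from DERIV_chain2[OF prof_has_derivative this] assms show ?thesis by simp
qed

lemma prof_deriv_reflect_has_derivative:
  assumes "r > 0"
  shows "((\<lambda>r. - prof_deriv R (R - r)) has_real_derivative prof_deriv2 R (R - r)) (at r)"
proof -
  have "((\<lambda>r. R - r) has_real_derivative -1) (at r)" by (auto intro!: derivative_eq_intros)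
  from DERIV_minus[OF DERIV_chain2[OF prof_deriv_has_derivative this]] assms show ?thesis by simp
qed

lemma tendsto_prof:
  assumes "(R \<longlongrightarrow> A) F" and "(t \<longlongrightarrow> b) F" and "A > 0" and "eventually (\<lambda>x. t x \<le> R x) F"
  shows "((\<lambda>x. prof (R x) (t x)) \<longlongrightarrow> prof A b) F"
  unfolding prof_def
  by (intro tendsto_intros tendsto_powr' assms) (use assms in \<open>auto elim: eventually_mono\<close>)

lemma prof_reflect: "prof R (R - n) = prof_const * (R powr (4/3) - n powr (4/3))"
  by (simp add: prof_def)

lemma prof_deriv_zero: "R \<ge> 0 \<Longrightarrow> prof_deriv R 0 = (3 * R) powr (1/3)"
proof -
  assume "R \<ge> 0"
  have "(3::real) powr (4/3) = 3 powr (1 + 1/3)" by simp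
  also have "\<dots> = 3 powr 1 * 3 powr (1/3)" by (rule powr_add)
  finally have "prof_const * (4/3) = 3 powr (1/3)" by (simp add: prof_const_def)
  then show ?thesis using \<open>R \<ge> 0\<close> by (simp add: prof_deriv_def powr_mult)
qed

section \<open>Calculus facts about test functions\<close>

lemma second_derivative_test_pos:
  fixes h h' :: "real \<Rightarrow> real"
  assumes "e > 0"
    and deriv: "\<And>t. \<bar>t - t0\<bar> < e \<Longrightarrow> (h has_real_derivative h' t) (at t)"
    and deriv2: "(h' has_real_derivative h'') (at t0)"
    and "h t0 = 0" and "h' t0 = 0" and "h'' > 0"
  obtains e' where "e' > 0" "\<And>t. 0 < \<bar>t - t0\<bar> \<Longrightarrow> \<bar>t - t0\<bar> < e' \<Longrightarrow> h t > 0"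
proof -
  have "((\<lambda>s. (h' (t0 + s) - h' t0) / s) \<longlongrightarrow> h'') (at 0)"
    using deriv2 by (simp add: DERIV_def)
  then have "eventually (\<lambda>s. (h' (t0 + s) - h' t0) / s > 0) (at 0)"
    using \<open>h'' > 0\<close> by (rule order_tendstoD)
  then obtain e1 where "e1 > 0" and
    e1: "\<And>s. s \<noteq> 0 \<Longrightarrow> dist s 0 < e1 \<Longrightarrow> h' (t0 + s) / s > 0"
    unfolding eventually_at using \<open>h' t0 = 0\<close> by auto
  define e' where "e' = min e e1"
  have sign: "h' z / (z - t0) > 0" if "0 < \<bar>z - t0\<bar>" "\<bar>z - t0\<bar> < e'" for z
    using e1[of "z - t0"] that by (auto simp: e'_def dist_real_def)
  have "h t > 0" if t: "0 < \<bar>t - t0\<bar>" "\<bar>t - t0\<bar> < e'" for t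
  proof (cases "t < t0")
    case True
    have "\<exists>z. t < z \<and> z < t0 \<and> h t0 - h t = (t0 - t) * h' z"
      by (rule MVT2[OF True]) (use t in \<open>auto intro!: deriv simp: e'_def\<close>)
    then obtain z where z: "t < z" "z < t0" "h t0 - h t = (t0 - t) * h' z" by blast
    have "h' z < 0"
      using sign[of z] z t by (simp add: zero_less_divide_iff)
    then have "(t0 - t) * h' z < 0"
      using True by (simp add: mult_pos_neg)
    then show ?thesis using z \<open>h t0 = 0\<close> by linarith
  next
    case False
    then have "t0 < t" using t by auto
    have "\<exists>z. t0 < z \<and> z < t \<and> h t - h t0 = (t - t0) * h' z"
      by (rule MVT2[OF \<open>t0 < t\<close>]) (use t in \<open>auto intro!: deriv simp: e'_def\<close>)
    then obtain z where z: "t0 < z" "z < t" "h t - h t0 = (t - t0) * h' z" by blast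
    have "h' z > 0"
      using sign[of z] z t by (simp add: zero_less_divide_iff)
    then show ?thesis using z \<open>t0 < t\<close> \<open>h t0 = 0\<close> by simp
  qed
  moreover have "e' > 0" using \<open>e > 0\<close> \<open>e1 > 0\<close> by (simp add: e'_def)
  ultimately show thesis using that by blast
qed

lemma has_derivative_dir_le:
  fixes f :: "'a::real_normed_vector \<Rightarrow> real"
  assumes deriv: "(f has_derivative D) (at x)" and "a > 0"
    and bound: "\<And>t. 0 < t \<Longrightarrow> t < a \<Longrightarrow> f (x + t *\<^sub>R v) \<le> f x + t * m"
  shows "D v \<le> m"
proof -
  have "((\<lambda>r. x + r *\<^sub>R v) has_derivative (\<lambda>r. r *\<^sub>R v)) (at 0)"
    by (intro derivative_eq_intros) auto
  then have "((\<lambda>r. f (x + r *\<^sub>R v)) has_derivative (\<lambda>r. D (r *\<^sub>R v))) (at 0)"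
    by (rule has_derivative_compose) (use deriv in simp)
  then have "((\<lambda>r. f (x + r *\<^sub>R v)) has_real_derivative D v) (at 0)"
    unfolding has_field_derivative_def
    by (rule has_derivative_eq_rhs)
      (auto simp: mult.commute linear_scale[OF has_derivative_linear[OF deriv]])
  then have "((\<lambda>r. (f (x + r *\<^sub>R v) - f x) / r) \<longlongrightarrow> D v) (at 0)"
    by (simp add: DERIV_def)
  then have "((\<lambda>r. (f (x + r *\<^sub>R v) - f x) / r) \<longlongrightarrow> D v) (at_right 0)"
    by (rule filterlim_mono) (auto simp: at_within_le_at)
  moreover have "(f (x + r *\<^sub>R v) - f x) / r \<le> m" if "0 < r" "r < a" for r
    using bound[OF that] that by (simp add: divide_le_eq mult.commute)
  then have "eventually (\<lambda>r. (f (x + r *\<^sub>R v) - f x) / r \<le> m) (at_right 0)"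
    unfolding eventually_at_right_field using \<open>a > 0\<close> by blast
  ultimately show ?thesis
    by (rule tendsto_upperbound) simp
qed

lemma has_derivative_zero_of_power_bound:
  fixes f :: "'a::real_normed_vector \<Rightarrow> real"
  assumes "\<alpha> > 1" and "r > 0"
    and bound: "\<And>y. y \<in> S \<Longrightarrow> norm (y - x) < r \<Longrightarrow> \<bar>f y - f x\<bar> \<le> K * norm (y - x) powr \<alpha>"
  shows "(f has_derivative (\<lambda>h. 0)) (at x within S)"
  unfolding has_derivative_within_alt
proof (intro conjI allI impI bounded_linear_zero)
  fix e :: real assume "e > 0"
  define \<delta> where "\<delta> = min r ((e / (\<bar>K\<bar> + 1)) powr (1 / (\<alpha> - 1)))"
  have "\<delta> > 0" using \<open>r > 0\<close> \<open>e > 0\<close> by (simp add: \<delta>_def)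
  moreover have "\<bar>f y - f x\<bar> \<le> e * norm (y - x)" if "y \<in> S" "norm (y - x) < \<delta>" for y
  proof (cases "y = x")
    case False
    let ?n = "norm (y - x)"
    have n: "?n > 0" using False by simp
    have "?n powr (\<alpha> - 1) \<le> ((e / (\<bar>K\<bar> + 1)) powr (1 / (\<alpha> - 1))) powr (\<alpha> - 1)"
      using that \<open>\<alpha> > 1\<close> by (intro powr_mono2) (auto simp: \<delta>_def)
    also have "\<dots> = e / (\<bar>K\<bar> + 1)"
      using \<open>\<alpha> > 1\<close> \<open>e > 0\<close> by (simp add: powr_powr)
    finally have "(\<bar>K\<bar> + 1) * ?n powr (\<alpha> - 1) \<le> e"
      by (simp add: pos_le_divide_eq mult.commute add_pos_nonneg)
    moreover have "\<bar>K\<bar> * ?n powr (\<alpha> - 1) \<le> (\<bar>K\<bar> + 1) * ?n powr (\<alpha> - 1)"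
      by (intro mult_right_mono) auto
    ultimately have "\<bar>K\<bar> * ?n powr (\<alpha> - 1) \<le> e"
      by linarith
    have "\<bar>f y - f x\<bar> \<le> K * ?n powr \<alpha>"
      using bound that by (simp add: \<delta>_def)
    also have "\<dots> \<le> \<bar>K\<bar> * ?n powr \<alpha>"
      by (intro mult_right_mono) auto
    also have "\<dots> = (\<bar>K\<bar> * ?n powr (\<alpha> - 1)) * ?n"
      using n by (simp add: powr_diff)
    also have "\<dots> \<le> e * ?n"
      using \<open>\<bar>K\<bar> * ?n powr (\<alpha> - 1) \<le> e\<close> by (intro mult_right_mono) auto
    finally show ?thesis .
  qed simp
  ultimately show "\<exists>\<delta>>0. \<forall>y\<in>S. norm (y - x) < \<delta> \<longrightarrow> norm (f y - f x - 0) \<le> e * norm (y - x)"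
    unfolding real_norm_def diff_0_right by blast
qed

lemma power2_le_powr_four_thirds:
  fixes u M c :: real
  assumes "0 \<le> u" "u \<le> (c / M) powr (3/2)" "M > 0" "c > 0"
  shows "M * u\<^sup>2 \<le> c * u powr (4/3)"
proof -
  have "u powr (2/3) \<le> ((c / M) powr (3/2)) powr (2/3)"
    using assms by (intro powr_mono2) auto
  also have "\<dots> = c / M"
    using assms by (simp add: powr_powr)
  finally have "M * u powr (2/3) \<le> c"
    using \<open>M > 0\<close> by (simp add: pos_le_divide_eq mult.commute)
  then have "M * u powr (2/3) * u powr (4/3) \<le> c * u powr (4/3)"
    by (intro mult_right_mono) auto
  moreover have "u powr (2/3) * u powr (4/3) = u\<^sup>2"
    using assms(1) by (cases "u = 0") (simp_all flip: powr_add)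
  ultimately show ?thesis by (simp add: mult.assoc)
qed

lemma tendsto_comp_ratio:
  fixes f g :: "real \<Rightarrow> real"
  assumes "(f has_real_derivative f') (at 0)" and "f 0 = 0"
    and ratio: "((\<lambda>t. g t / t) \<longlongrightarrow> 1) (at_right 0)"
  shows "((\<lambda>t. f (g t) / t) \<longlongrightarrow> f') (at_right 0)"
proof -
  define Q where "Q = (\<lambda>s. if s = 0 then f' else f s / s)"
  have "(Q \<longlongrightarrow> f') (at 0)"
  proof (rule Lim_transform_eventually)
    show "((\<lambda>s. f s / s) \<longlongrightarrow> f') (at 0)"
      using assms(1,2) by (simp add: DERIV_def)
    show "eventually (\<lambda>s. f s / s = Q s) (at 0)"
      by (simp add: Q_def eventually_at_filter)
  qed
  then have "isCont Q 0" by (simp add: isCont_def Q_def)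
  have pos: "eventually (\<lambda>t. t > 0) (at_right (0::real))"
    by (simp add: eventually_at_right_less)
  have "((\<lambda>t. g t / t * t) \<longlongrightarrow> 0) (at_right 0)"
    using tendsto_mult[OF ratio tendsto_ident_at] by simp
  moreover have "eventually (\<lambda>t. g t / t * t = g t) (at_right 0)"
    using pos by eventually_elim simp
  ultimately have "(g \<longlongrightarrow> 0) (at_right 0)"
    by (rule Lim_transform_eventually)
  then have "((\<lambda>t. Q (g t) * (g t / t)) \<longlongrightarrow> f') (at_right 0)"
    using tendsto_mult[OF isCont_tendsto_compose[OF \<open>isCont Q 0\<close>] ratio] by (simp add: Q_def)
  moreover have "eventually (\<lambda>t. Q (g t) * (g t / t) = f (g t) / t) (at_right 0)"
    using pos by eventually_elim (simp add: Q_def \<open>f 0 = 0\<close>)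
  ultimately show ?thesis
    by (rule Lim_transform_eventually)
qed

lemma local_min_at_imp_eventually:
  assumes "open \<Omega>" "x0 \<in> \<Omega>" "local_min_at \<Omega> f x0"
  shows "eventually (\<lambda>y. f x0 \<le> f y) (at x0)"
proof -
  obtain e where "e > 0" "\<forall>y\<in>\<Omega> \<inter> ball x0 e. f x0 \<le> f y"
    using assms(3) unfolding local_min_at_def by blast
  moreover have "eventually (\<lambda>y. y \<in> \<Omega> \<inter> ball x0 e) (at x0)"
    using assms(1,2) \<open>e > 0\<close> by (intro eventually_at_in_open' open_Int) auto
  ultimately show ?thesis by (auto elim: eventually_mono)
qed

lemma gradient_eq_of_local_min:
  fixes f g :: "'a::real_inner \<Rightarrow> real"
  assumes "(f has_derivative (\<lambda>h. a \<bullet> h)) (at x)" "(g has_derivative (\<lambda>h. b \<bullet> h)) (at x)"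
    and "eventually (\<lambda>y. f x - g x \<le> f y - g y) (at x)"
  shows "a = b"
proof -
  have "(\<lambda>h. a \<bullet> h - b \<bullet> h) = (\<lambda>h. 0)"
    using has_derivative_local_min[OF has_derivative_diff[OF assms(1,2)] assms(3)] .
  then have "(a - b) \<bullet> (a - b) = 0"
    by (metis inner_diff_left)
  then show ?thesis by simp
qed

lemma has_real_derivative_along_line:
  fixes \<psi> :: "'a::real_inner \<Rightarrow> real"
  assumes "(\<psi> has_derivative (\<lambda>h. g \<bullet> h)) (at (x0 + s *\<^sub>R e))"
  shows "((\<lambda>s. \<psi> (x0 + s *\<^sub>R e)) has_real_derivative g \<bullet> e) (at s)"
proof -
  have "((\<lambda>r. x0 + r *\<^sub>R e) has_derivative (\<lambda>r. r *\<^sub>R e)) (at s)"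
    by (intro derivative_eq_intros) auto
  then have "((\<lambda>r. \<psi> (x0 + r *\<^sub>R e)) has_derivative (\<lambda>r. g \<bullet> (r *\<^sub>R e))) (at s)"
    by (rule has_derivative_compose) (use assms in simp)
  then show ?thesis
    unfolding has_field_derivative_def by (rule has_derivative_eq_rhs) (auto simp: mult.commute)
qed

lemma has_real_derivative_gradient_along_line:
  fixes G :: "'a::real_inner \<Rightarrow> 'a"
  assumes "(G has_derivative H) (at x0)"
  shows "((\<lambda>s. G (x0 + s *\<^sub>R e) \<bullet> e) has_real_derivative H e \<bullet> e) (at 0)"
proof -
  have "((\<lambda>r. x0 + r *\<^sub>R e) has_derivative (\<lambda>r. r *\<^sub>R e)) (at 0)"
    by (intro derivative_eq_intros) auto
  then have "((\<lambda>r. G (x0 + r *\<^sub>R e)) has_derivative (\<lambda>r. H (r *\<^sub>R e))) (at 0)"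
    by (rule has_derivative_compose) (use assms in simp)
  then have "((\<lambda>r. G (x0 + r *\<^sub>R e) \<bullet> e) has_derivative (\<lambda>r. H (r *\<^sub>R e) \<bullet> e)) (at 0)"
    by (intro derivative_eq_intros) auto
  then show ?thesis
    unfolding has_field_derivative_def
    by (rule has_derivative_eq_rhs)
      (auto simp: mult.commute linear_scale[OF has_derivative_linear[OF assms]])
qed

text \<open>One-sided information suffices: since the first derivatives agree, a second-order gap
  would make \<open>\<psi> - p\<close> smaller than at \<open>x0\<close> on both sides of it.\<close>
lemma hessian_ge_along_line:
  fixes \<psi> :: "'a::euclidean_space \<Rightarrow> real"
  assumes C2: "C2_on \<Omega> \<psi> G H" and "x0 \<in> \<Omega>" and "a > 0"
    and line: "\<And>s. \<bar>s\<bar> < a \<Longrightarrow> x0 + s *\<^sub>R e \<in> \<Omega>"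
    and dp: "\<And>s. \<bar>s\<bar> < a \<Longrightarrow> (p has_real_derivative p' s) (at s)"
    and dp2: "(p' has_real_derivative p2) (at 0)"
    and grad: "G x0 \<bullet> e = p' 0"
    and "\<delta> > 0" and min: "\<And>s. -\<delta> < s \<Longrightarrow> s < 0 \<Longrightarrow> \<psi> x0 - p 0 \<le> \<psi> (x0 + s *\<^sub>R e) - p s"
  shows "p2 \<le> H x0 e \<bullet> e"
proof (rule ccontr)
  assume "\<not> p2 \<le> H x0 e \<bullet> e"
  define k where "k = (\<lambda>s. p s - \<psi> (x0 + s *\<^sub>R e) + \<psi> x0 - p 0)"
  define k' where "k' = (\<lambda>s. p' s - G (x0 + s *\<^sub>R e) \<bullet> e)"
  have d\<psi>: "\<And>y. y \<in> \<Omega> \<Longrightarrow> (\<psi> has_derivative (\<lambda>h. G y \<bullet> h)) (at y)"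
    and dG: "\<And>y. y \<in> \<Omega> \<Longrightarrow> (G has_derivative H y) (at y)"
    using C2 unfolding C2_on_def by auto
  obtain e' where "e' > 0" and kpos: "\<And>t. 0 < \<bar>t - 0\<bar> \<Longrightarrow> \<bar>t - 0\<bar> < e' \<Longrightarrow> k t > 0"
  proof (rule second_derivative_test_pos[where h' = k' and h'' = "p2 - H x0 e \<bullet> e", OF \<open>a > 0\<close>])
    show "(k has_real_derivative k' t) (at t)" if "\<bar>t - 0\<bar> < a" for t
      unfolding k_def k'_def
      using has_real_derivative_along_line[OF d\<psi>[OF line]] dp that
      by (auto intro!: derivative_eq_intros)
    show "(k' has_real_derivative p2 - H x0 e \<bullet> e) (at 0)"
      unfolding k'_def
      using has_real_derivative_gradient_along_line[OF dG[OF \<open>x0 \<in> \<Omega>\<close>]] dp2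
      by (auto intro!: derivative_eq_intros)
  qed (use grad \<open>\<not> p2 \<le> H x0 e \<bullet> e\<close> in \<open>auto simp: k_def k'_def\<close>)
  define s where "s = - min e' \<delta> / 2"
  have "k s > 0" using \<open>e' > 0\<close> \<open>\<delta> > 0\<close> by (intro kpos) (auto simp: s_def)
  moreover have "\<psi> x0 - p 0 \<le> \<psi> (x0 + s *\<^sub>R e) - p s"
    using \<open>e' > 0\<close> \<open>\<delta> > 0\<close> by (intro min) (auto simp: s_def)
  ultimately show False by (simp add: k_def)
qed

lemma C2_on_uminus: "C2_on \<Omega> \<psi> G H \<Longrightarrow> C2_on \<Omega> (\<lambda>x. - \<psi> x) (\<lambda>x. - G x) (\<lambda>x h. - H x h)"
  unfolding C2_on_def by (auto intro!: derivative_eq_intros continuous_intros)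

lemma inf_lap_uminus:
  assumes "linear (H x)"
  shows "inf_lap (\<lambda>x. - G x) (\<lambda>x h. - H x h) x = - inf_lap G H x"
  unfolding inf_lap_def using linear_neg[OF assms] by simp

lemma C2_on_linear_hessian: "C2_on \<Omega> \<psi> G H \<Longrightarrow> x \<in> \<Omega> \<Longrightarrow> linear (H x)"
  unfolding C2_on_def by (auto dest: has_derivative_linear)

lemma hessian_le_along_line:
  fixes \<psi> :: "'a::euclidean_space \<Rightarrow> real"
  assumes C2: "C2_on \<Omega> \<psi> G H" and "x0 \<in> \<Omega>" and "a > 0"
    and line: "\<And>s. \<bar>s\<bar> < a \<Longrightarrow> x0 + s *\<^sub>R e \<in> \<Omega>"
    and dp: "\<And>s. \<bar>s\<bar> < a \<Longrightarrow> (p has_real_derivative p' s) (at s)"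
    and dp2: "(p' has_real_derivative p2) (at 0)"
    and grad: "G x0 \<bullet> e = p' 0"
    and "\<delta> > 0" and max: "\<And>s. -\<delta> < s \<Longrightarrow> s < 0 \<Longrightarrow> \<psi> (x0 + s *\<^sub>R e) - p s \<le> \<psi> x0 - p 0"
  shows "H x0 e \<bullet> e \<le> p2"
proof -
  have "- p2 \<le> (\<lambda>h. - H x0 h) e \<bullet> e"
  proof (rule hessian_ge_along_line[OF C2_on_uminus[OF C2] \<open>x0 \<in> \<Omega>\<close> \<open>a > 0\<close> line
        _ _ _ \<open>\<delta> > 0\<close>, where p = "\<lambda>s. - p s" and p' = "\<lambda>s. - p' s"])
    show "((\<lambda>s. - p s) has_real_derivative - p' s) (at s)" if "\<bar>s\<bar> < a" for s
      using dp[OF that] by (rule DERIV_minus)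
    show "((\<lambda>s. - p' s) has_real_derivative - p2) (at 0)"
      using dp2 by (rule DERIV_minus)
    show "- G x0 \<bullet> e = - p' 0" using grad by simp
    show "- \<psi> x0 - - p 0 \<le> - \<psi> (x0 + s *\<^sub>R e) - - p s" if "- \<delta> < s" "s < 0" for s
      using max[OF that] by simp
  qed
  then show ?thesis by simp
qed

lemma inf_lap_scaled_gradient:
  assumes "G x = c *\<^sub>R e" and "linear (H x)"
  shows "inf_lap G H x = c\<^sup>2 * (H x e \<bullet> e)"
  unfolding inf_lap_def assms(1) using linear_scale[OF assms(2)]
  by (simp add: power2_eq_square)

lemma inf_lap_ge_of_local_min_along_line:
  fixes \<psi> v :: "'a::euclidean_space \<Rightarrow> real"
  assumes "open \<Omega>" and C2: "C2_on \<Omega> \<psi> G H" and "x0 \<in> \<Omega>" and "norm e = 1"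
    and min: "local_min_at \<Omega> (\<lambda>x. \<psi> x - v x) x0"
    and dv: "(v has_derivative (\<lambda>h. (p' 0 *\<^sub>R e) \<bullet> h)) (at x0)"
    and "a > 0" and line: "\<And>s. \<bar>s\<bar> < a \<Longrightarrow> x0 + s *\<^sub>R e \<in> \<Omega>"
    and dp: "\<And>s. \<bar>s\<bar> < a \<Longrightarrow> (p has_real_derivative p' s) (at s)"
    and dp2: "(p' has_real_derivative p2) (at 0)"
    and vp: "\<And>s. -a < s \<Longrightarrow> s \<le> 0 \<Longrightarrow> v (x0 + s *\<^sub>R e) = p s"
  shows "(p' 0)\<^sup>2 * p2 \<le> inf_lap G H x0"
proof -
  have d\<psi>: "(\<psi> has_derivative (\<lambda>h. G x0 \<bullet> h)) (at x0)"
    using C2 \<open>x0 \<in> \<Omega>\<close> unfolding C2_on_def by blast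
  have grad: "G x0 = p' 0 *\<^sub>R e"
    using gradient_eq_of_local_min[OF d\<psi> dv]
      local_min_at_imp_eventually[OF \<open>open \<Omega>\<close> \<open>x0 \<in> \<Omega>\<close> min] by simp
  obtain r where "r > 0" and r: "\<And>y. y \<in> \<Omega> \<Longrightarrow> y \<in> ball x0 r \<Longrightarrow> \<psi> x0 - v x0 \<le> \<psi> y - v y"
    using min unfolding local_min_at_def by blast
  have "p2 \<le> H x0 e \<bullet> e"
  proof (rule hessian_ge_along_line[OF C2 \<open>x0 \<in> \<Omega>\<close> \<open>a > 0\<close> line dp dp2])
    show "G x0 \<bullet> e = p' 0"
      using grad \<open>norm e = 1\<close> by (simp add: inner_commute power2_norm_eq_inner[symmetric])
    show "min r a > 0" using \<open>r > 0\<close> \<open>a > 0\<close> by simp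
    fix s assume s: "- min r a < s" "s < 0"
    have "x0 + s *\<^sub>R e \<in> ball x0 r"
      using s \<open>norm e = 1\<close> by (simp add: dist_norm)
    then show "\<psi> x0 - p 0 \<le> \<psi> (x0 + s *\<^sub>R e) - p s"
      using r[OF line] vp[of s] vp[of 0] s \<open>a > 0\<close> by force
  qed
  then show ?thesis
    using inf_lap_scaled_gradient[of G x0 "p' 0" e H, OF grad C2_on_linear_hessian[OF C2 \<open>x0 \<in> \<Omega>\<close>]]
    by (simp add: mult_left_mono)
qed

lemma inf_lap_le_of_local_max_along_line:
  fixes \<psi> v :: "'a::euclidean_space \<Rightarrow> real"
  assumes "open \<Omega>" and C2: "C2_on \<Omega> \<psi> G H" and "x0 \<in> \<Omega>" and "norm e = 1"
    and max: "local_max_at \<Omega> (\<lambda>x. \<psi> x - v x) x0"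
    and dv: "(v has_derivative (\<lambda>h. (p' 0 *\<^sub>R e) \<bullet> h)) (at x0)"
    and "a > 0" and line: "\<And>s. \<bar>s\<bar> < a \<Longrightarrow> x0 + s *\<^sub>R e \<in> \<Omega>"
    and dp: "\<And>s. \<bar>s\<bar> < a \<Longrightarrow> (p has_real_derivative p' s) (at s)"
    and dp2: "(p' has_real_derivative p2) (at 0)"
    and vp: "\<And>s. -a < s \<Longrightarrow> s \<le> 0 \<Longrightarrow> v (x0 + s *\<^sub>R e) = p s"
  shows "inf_lap G H x0 \<le> (p' 0)\<^sup>2 * p2"
proof -
  have "(- p' 0)\<^sup>2 * - p2 \<le> inf_lap (\<lambda>x. - G x) (\<lambda>x h. - H x h) x0"
  proof (rule inf_lap_ge_of_local_min_along_line[OF \<open>open \<Omega>\<close> C2_on_uminus[OF C2]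
        \<open>x0 \<in> \<Omega>\<close> \<open>norm e = 1\<close> _ _ \<open>a > 0\<close> line, where v = "\<lambda>x. - v x" and p = "\<lambda>s. - p s"])
    obtain r where "r > 0" and r: "\<And>y. y \<in> \<Omega> \<inter> ball x0 r \<Longrightarrow> \<psi> y - v y \<le> \<psi> x0 - v x0"
      using max unfolding local_max_at_def by blast
    then show "local_min_at \<Omega> (\<lambda>x. - \<psi> x - - v x) x0"
      unfolding local_min_at_def
    proof (intro exI[of _ r] conjI ballI)
      fix y assume "y \<in> \<Omega> \<inter> ball x0 r"
      from r[OF this] show "- \<psi> x0 - - v x0 \<le> - \<psi> y - - v y" by simp
    qed (rule \<open>r > 0\<close>)
    show "((\<lambda>x. - v x) has_derivative (\<lambda>h. (- p' 0 *\<^sub>R e) \<bullet> h)) (at x0)"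
      using dv by (auto intro!: derivative_eq_intros)
  qed (use dp dp2 vp in \<open>auto intro!: DERIV_minus\<close>)
  then show ?thesis
    using inf_lap_uminus[where G = G and H = H and x = x0, OF C2_on_linear_hessian[OF C2 \<open>x0 \<in> \<Omega>\<close>]] by simp
qed

lemma C2_on_radial_quadratic:
  fixes c :: "'a::euclidean_space"
  obtains G H where
    "C2_on UNIV (\<lambda>x. A + a * ((x - c) \<bullet> (x - c) - \<tau>) + b * ((x - c) \<bullet> (x - c) - \<tau>)\<^sup>2) G H"
    and "\<And>x. (x - c) \<bullet> (x - c) = \<tau> \<Longrightarrow> inf_lap G H x = 8 * a^3 * \<tau> + 32 * a\<^sup>2 * b * \<tau>\<^sup>2"
proof
  define G where "G = (\<lambda>x. (2 * (a + 2 * b * ((x - c) \<bullet> (x - c) - \<tau>))) *\<^sub>R (x - c))"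
  define H where "H = (\<lambda>x h. (2 * (a + 2 * b * ((x - c) \<bullet> (x - c) - \<tau>))) *\<^sub>R h
                      + (8 * b * ((x - c) \<bullet> h)) *\<^sub>R (x - c))"
  show "C2_on UNIV (\<lambda>x. A + a * ((x - c) \<bullet> (x - c) - \<tau>) + b * ((x - c) \<bullet> (x - c) - \<tau>)\<^sup>2) G H"
    unfolding C2_on_def
  proof (intro conjI ballI allI)
    fix x :: 'a
    show "((\<lambda>x. A + a * ((x - c) \<bullet> (x - c) - \<tau>) + b * ((x - c) \<bullet> (x - c) - \<tau>)\<^sup>2)
        has_derivative (\<lambda>h. G x \<bullet> h)) (at x)"
      unfolding G_def by (auto intro!: derivative_eq_intros ext simp: algebra_simps inner_commute)
    show "(G has_derivative H x) (at x)"
      unfolding H_def G_def by (auto intro!: derivative_eq_intros ext simp: algebra_simps inner_commute)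
  next
    fix h :: 'a
    show "continuous_on UNIV (\<lambda>x. H x h)"
      unfolding H_def by (intro continuous_intros)
  qed
  fix x assume \<tau>: "(x - c) \<bullet> (x - c) = \<tau>"
  define w where "w = x - c"
  have "inf_lap G H x = ((2 * a) *\<^sub>R ((2 * a) *\<^sub>R w) + (8 * b * (w \<bullet> ((2 * a) *\<^sub>R w))) *\<^sub>R w)
      \<bullet> ((2 * a) *\<^sub>R w)"
    unfolding inf_lap_def G_def H_def w_def[symmetric] using \<tau> by (simp add: w_def)
  also have "\<dots> = 8 * a^3 * \<tau> + 32 * a\<^sup>2 * b * \<tau>\<^sup>2"
    using \<tau> by (simp add: inner_add_left algebra_simps power2_eq_square power3_eq_cube
        flip: w_def)
  finally show "inf_lap G H x = 8 * a^3 * \<tau> + 32 * a\<^sup>2 * b * \<tau>\<^sup>2" .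
qed

text \<open>The quadratic polynomial in \<open>|x - c|\<^sup>2\<close> matching \<open>g(|x - c|)\<close> to first order at \<open>x1\<close>,
  with radial second derivative \<open>g'' - \<delta>\<close>, stays below \<open>g(|x - c|)\<close> near \<open>x1\<close>.\<close>
lemma radial_test_below:
  fixes c x1 :: "'a::euclidean_space" and g g' :: "real \<Rightarrow> real"
  assumes "x1 \<noteq> c" and "e > 0"
    and dg: "\<And>r. \<bar>r - norm (x1 - c)\<bar> < e \<Longrightarrow> (g has_real_derivative g' r) (at r)"
    and dg2: "(g' has_real_derivative g'') (at (norm (x1 - c)))" and "\<delta> > 0"
  obtains \<psi> G H e' where "C2_on UNIV \<psi> G H" and "\<psi> x1 = g (norm (x1 - c))" and "e' > 0"
    and "\<And>x. x \<in> ball x1 e' \<Longrightarrow> \<psi> x \<le> g (norm (x - c))"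
    and "inf_lap G H x1 = (g' (norm (x1 - c)))\<^sup>2 * (g'' - \<delta>)"
proof -
  define r1 where "r1 = norm (x1 - c)"
  have "r1 > 0" using \<open>x1 \<noteq> c\<close> by (simp add: r1_def)
  define a where "a = g' r1 / (2 * r1)"
  define b where "b = (g'' - \<delta> - 2 * a) / (8 * r1\<^sup>2)"
  define q where "q = (\<lambda>r. g r1 + a * (r\<^sup>2 - r1\<^sup>2) + b * (r\<^sup>2 - r1\<^sup>2)\<^sup>2)"
  define q' where "q' = (\<lambda>r::real. 2 * r * (a + 2 * b * (r\<^sup>2 - r1\<^sup>2)))"
  define \<psi> where "\<psi> = (\<lambda>x. g r1 + a * ((x - c) \<bullet> (x - c) - r1\<^sup>2) + b * ((x - c) \<bullet> (x - c) - r1\<^sup>2)\<^sup>2)"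
  have \<psi>q: "\<psi> x = q (norm (x - c))" for x
    by (simp add: \<psi>_def q_def power2_norm_eq_inner)
  obtain G H where C2: "C2_on UNIV \<psi> G H"
    and lap: "\<And>x. (x - c) \<bullet> (x - c) = r1\<^sup>2 \<Longrightarrow> inf_lap G H x = 8 * a^3 * r1\<^sup>2 + 32 * a\<^sup>2 * b * (r1\<^sup>2)\<^sup>2"
    using C2_on_radial_quadratic[where A = "g r1" and a = a and b = b and c = c and \<tau> = "r1\<^sup>2"]
    unfolding \<psi>_def by blast
  obtain e' where "e' > 0" and gq: "\<And>t. 0 < \<bar>t - r1\<bar> \<Longrightarrow> \<bar>t - r1\<bar> < e' \<Longrightarrow> g t - q t > 0"
  proof (rule second_derivative_test_pos[where h' = "\<lambda>r. g' r - q' r"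
        and h'' = "g'' - (2 * a + 8 * b * r1\<^sup>2)", OF \<open>e > 0\<close>])
    show "((\<lambda>r. g r - q r) has_real_derivative g' t - q' t) (at t)" if "\<bar>t - r1\<bar> < e" for t
      unfolding q_def q'_def using dg[of t] that
      by (auto intro!: derivative_eq_intros simp: r1_def algebra_simps power2_eq_square)
    show "((\<lambda>r. g' r - q' r) has_real_derivative g'' - (2 * a + 8 * b * r1\<^sup>2)) (at r1)"
      unfolding q'_def using dg2
      by (auto intro!: derivative_eq_intros simp: r1_def algebra_simps power2_eq_square)
  qed (use \<open>r1 > 0\<close> \<open>\<delta> > 0\<close> in \<open>auto simp: q_def q'_def a_def b_def field_simps\<close>)
  show thesis
  proof
    show "C2_on UNIV \<psi> G H" by (fact C2)
    show "\<psi> x1 = g (norm (x1 - c))" by (simp add: \<psi>q q_def r1_def)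
    show "e' > 0" by (fact \<open>e' > 0\<close>)
    show "\<psi> x \<le> g (norm (x - c))" if "x \<in> ball x1 e'" for x
    proof (cases "norm (x - c) = r1")
      case False
      have "\<bar>norm (x - c) - r1\<bar> \<le> norm (x - x1)"
        unfolding r1_def by (metis norm_triangle_ineq3 diff_diff_eq2 diff_add_cancel add_diff_cancel_left)
      also have "\<dots> < e'" using that by (simp add: dist_norm norm_minus_commute)
      finally show ?thesis using gq[of "norm (x - c)"] False by (simp add: \<psi>q)
    qed (simp add: \<psi>q q_def)
    have "inf_lap G H x1 = 8 * a^3 * r1\<^sup>2 + 32 * a\<^sup>2 * b * (r1\<^sup>2)\<^sup>2"
      by (rule lap) (simp add: r1_def power2_norm_eq_inner)
    also have "\<dots> = (g' r1)\<^sup>2 * (g'' - \<delta>)"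
      using \<open>r1 > 0\<close> by (simp add: a_def b_def field_simps power2_eq_square power3_eq_cube)
    finally show "inf_lap G H x1 = (g' (norm (x1 - c)))\<^sup>2 * (g'' - \<delta>)"
      by (simp add: r1_def)
  qed
qed

lemma radial_test_above:
  fixes c x1 :: "'a::euclidean_space" and g g' :: "real \<Rightarrow> real"
  assumes "x1 \<noteq> c" and "e > 0"
    and dg: "\<And>r. \<bar>r - norm (x1 - c)\<bar> < e \<Longrightarrow> (g has_real_derivative g' r) (at r)"
    and dg2: "(g' has_real_derivative g'') (at (norm (x1 - c)))" and "\<delta> > 0"
  obtains \<psi> G H e' where "C2_on UNIV \<psi> G H" and "\<psi> x1 = g (norm (x1 - c))" and "e' > 0"
    and "\<And>x. x \<in> ball x1 e' \<Longrightarrow> g (norm (x - c)) \<le> \<psi> x"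
    and "inf_lap G H x1 = (g' (norm (x1 - c)))\<^sup>2 * (g'' + \<delta>)"
proof -
  obtain \<psi> G H e' where C2: "C2_on UNIV \<psi> G H" and "\<psi> x1 = - g (norm (x1 - c))" and "e' > 0"
    and below: "\<And>x. x \<in> ball x1 e' \<Longrightarrow> \<psi> x \<le> - g (norm (x - c))"
    and lap: "inf_lap G H x1 = (- g' (norm (x1 - c)))\<^sup>2 * (- g'' - \<delta>)"
    by (rule radial_test_below[OF \<open>x1 \<noteq> c\<close> \<open>e > 0\<close> _ _ \<open>\<delta> > 0\<close>,
          where g = "\<lambda>r. - g r" and g' = "\<lambda>r. - g' r"])
      (use dg dg2 in \<open>auto intro!: DERIV_minus\<close>)
  show thesis
  proof
    show "C2_on UNIV (\<lambda>x. - \<psi> x) (\<lambda>x. - G x) (\<lambda>x h. - H x h)"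
      using C2 by (rule C2_on_uminus)
    show "inf_lap (\<lambda>x. - G x) (\<lambda>x h. - H x h) x1 = (g' (norm (x1 - c)))\<^sup>2 * (g'' + \<delta>)"
      using lap inf_lap_uminus[where G = G and H = H and x = x1, OF C2_on_linear_hessian[OF C2]]
      by (simp add: algebra_simps)
  qed (use \<open>\<psi> x1 = - g (norm (x1 - c))\<close> \<open>e' > 0\<close> below in force)+
qed

lemma C2_on_add_const: "C2_on UNIV \<psi> G H \<Longrightarrow> C2_on S (\<lambda>x. \<psi> x + C) G H"
  unfolding C2_on_def by (auto intro!: derivative_eq_intros intro: continuous_on_subset)

text \<open>\<open>(g')\<^sup>2 g'' < -1\<close> says that \<open>g(|x - c|)\<close> is a strict classical supersolution near \<open>x1\<close>.\<close>
lemma visc_subsol_not_touched_above_by_radial: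
  fixes c x1 :: "'a::euclidean_space"
  assumes sub: "visc_subsol \<Omega> u" and "x1 \<in> \<Omega>" and "x1 \<noteq> c" and "e > 0"
    and dg: "\<And>r. \<bar>r - norm (x1 - c)\<bar> < e \<Longrightarrow> (g has_real_derivative g' r) (at r)"
    and dg2: "(g' has_real_derivative g'') (at (norm (x1 - c)))"
    and strict: "(g' (norm (x1 - c)))\<^sup>2 * g'' < -1"
    and touch: "\<And>x. x \<in> \<Omega> \<Longrightarrow> dist x x1 < e \<Longrightarrow>
      u x - g (norm (x - c)) \<le> u x1 - g (norm (x1 - c))"
  shows False
proof -
  define A where "A = (g' (norm (x1 - c)))\<^sup>2"
  define \<delta> where "\<delta> = (- 1 - A * g'') / (2 * (A + 1))"
  have "A \<ge> 0" by (simp add: A_def)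
  have strict': "A * g'' < -1" using strict by (simp add: A_def)
  have "\<delta> > 0" unfolding \<delta>_def using strict' \<open>A \<ge> 0\<close> by (intro divide_pos_pos) auto
  have "A * \<delta> = A / (A + 1) * ((- 1 - A * g'') / 2)"
    using \<open>A \<ge> 0\<close> by (simp add: \<delta>_def field_simps)
  also have "\<dots> \<le> 1 * ((- 1 - A * g'') / 2)"
    using strict' \<open>A \<ge> 0\<close> by (intro mult_right_mono) auto
  finally have A\<delta>: "A * \<delta> \<le> (- 1 - A * g'') / 2" by simp
  obtain \<psi> G H e' where C2: "C2_on UNIV \<psi> G H" and \<psi>x1: "\<psi> x1 = g (norm (x1 - c))"
    and "e' > 0" and above: "\<And>x. x \<in> ball x1 e' \<Longrightarrow> g (norm (x - c)) \<le> \<psi> x"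
    and lap: "inf_lap G H x1 = A * (g'' + \<delta>)"
    unfolding A_def using radial_test_above[OF \<open>x1 \<noteq> c\<close> \<open>e > 0\<close> dg dg2 \<open>\<delta> > 0\<close>] by blast
  define C where "C = u x1 - \<psi> x1"
  have "local_min_at \<Omega> (\<lambda>x. (\<psi> x + C) - u x) x1"
    unfolding local_min_at_def
  proof (intro exI[of _ "min e e'"] conjI ballI)
    fix x assume "x \<in> \<Omega> \<inter> ball x1 (min e e')"
    then show "(\<psi> x1 + C) - u x1 \<le> (\<psi> x + C) - u x"
      using touch[of x] above[of x] \<psi>x1 by (auto simp: C_def dist_commute)
  qed (use \<open>e > 0\<close> \<open>e' > 0\<close> in simp)
  then have "- inf_lap G H x1 \<le> 1"
    using sub C2_on_add_const[OF C2] \<open>x1 \<in> \<Omega>\<close> unfolding visc_subsol_def by blast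
  then show False
    using lap A\<delta> strict' by (simp add: distrib_left)
qed

lemma visc_supersol_not_touched_below_by_radial:
  fixes c x1 :: "'a::euclidean_space"
  assumes super: "visc_supersol \<Omega> u" and "x1 \<in> \<Omega>" and "x1 \<noteq> c" and "e > 0"
    and dg: "\<And>r. \<bar>r - norm (x1 - c)\<bar> < e \<Longrightarrow> (g has_real_derivative g' r) (at r)"
    and dg2: "(g' has_real_derivative g'') (at (norm (x1 - c)))"
    and strict: "(g' (norm (x1 - c)))\<^sup>2 * g'' > -1"
    and touch: "\<And>x. x \<in> \<Omega> \<Longrightarrow> dist x x1 < e \<Longrightarrow>
      u x1 - g (norm (x1 - c)) \<le> u x - g (norm (x - c))"
  shows False
proof -
  define A where "A = (g' (norm (x1 - c)))\<^sup>2"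
  define \<delta> where "\<delta> = (1 + A * g'') / (2 * (A + 1))"
  have "A \<ge> 0" by (simp add: A_def)
  have strict': "A * g'' > -1" using strict by (simp add: A_def)
  have "\<delta> > 0" unfolding \<delta>_def using strict' \<open>A \<ge> 0\<close> by (intro divide_pos_pos) auto
  have "A * \<delta> = A / (A + 1) * ((1 + A * g'') / 2)"
    using \<open>A \<ge> 0\<close> by (simp add: \<delta>_def field_simps)
  also have "\<dots> \<le> 1 * ((1 + A * g'') / 2)"
    using strict' \<open>A \<ge> 0\<close> by (intro mult_right_mono) auto
  finally have A\<delta>: "A * \<delta> \<le> (1 + A * g'') / 2" by simp
  obtain \<psi> G H e' where C2: "C2_on UNIV \<psi> G H" and \<psi>x1: "\<psi> x1 = g (norm (x1 - c))"
    and "e' > 0" and below: "\<And>x. x \<in> ball x1 e' \<Longrightarrow> \<psi> x \<le> g (norm (x - c))"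
    and lap: "inf_lap G H x1 = A * (g'' - \<delta>)"
    unfolding A_def using radial_test_below[OF \<open>x1 \<noteq> c\<close> \<open>e > 0\<close> dg dg2 \<open>\<delta> > 0\<close>] by blast
  define C where "C = u x1 - \<psi> x1"
  have "local_max_at \<Omega> (\<lambda>x. (\<psi> x + C) - u x) x1"
    unfolding local_max_at_def
  proof (intro exI[of _ "min e e'"] conjI ballI)
    fix x assume "x \<in> \<Omega> \<inter> ball x1 (min e e')"
    then show "(\<psi> x + C) - u x \<le> (\<psi> x1 + C) - u x1"
      using touch[of x] below[of x] \<psi>x1 by (auto simp: C_def dist_commute)
  qed (use \<open>e > 0\<close> \<open>e' > 0\<close> in simp)
  then have "- inf_lap G H x1 \<ge> 1"
    using super C2_on_add_const[OF C2] \<open>x1 \<in> \<Omega>\<close> unfolding visc_supersol_def by blast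
  then show False
    using lap A\<delta> strict' by (simp add: right_diff_distrib)
qed

lemma visc_supersol_no_local_min:
  assumes "visc_supersol \<Omega> u" and "x0 \<in> \<Omega>" and "local_min_at \<Omega> u x0"
  shows False
proof -
  have "C2_on \<Omega> (\<lambda>x. u x0) (\<lambda>x. 0) (\<lambda>x h. 0)"
    unfolding C2_on_def by (auto intro!: derivative_eq_intros)
  moreover have "local_max_at \<Omega> (\<lambda>x. u x0 - u x) x0"
    using assms(3) unfolding local_min_at_def local_max_at_def by auto
  ultimately have "- inf_lap (\<lambda>x. 0) (\<lambda>x h. 0) x0 \<ge> 1"
    using assms(1,2) unfolding visc_supersol_def by blast
  then show False by (simp add: inf_lap_def)
qed

lemma constant_on_ball_of_power_bound:
  fixes u :: "'a::real_normed_vector \<Rightarrow> real"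
  assumes "\<alpha> > 1"
    and bound: "\<And>x y. x \<in> ball z \<eta> \<Longrightarrow> y \<in> ball z \<eta> \<Longrightarrow> u x - K * norm (y - x) powr \<alpha> \<le> u y"
  shows "\<exists>C. \<forall>x\<in>ball z \<eta>. u x = C"
proof (rule has_derivative_zero_constant[OF convex_ball])
  fix x assume "x \<in> ball z \<eta>"
  show "(u has_derivative (\<lambda>h. 0)) (at x within ball z \<eta>)"
  proof (rule has_derivative_zero_of_power_bound[OF \<open>\<alpha> > 1\<close> zero_less_one])
    fix y assume "y \<in> ball z \<eta>"
    then show "\<bar>u y - u x\<bar> \<le> K * norm (y - x) powr \<alpha>"
      using bound[OF \<open>x \<in> ball z \<eta>\<close> \<open>y \<in> ball z \<eta>\<close>] bound[OF \<open>y \<in> ball z \<eta>\<close> \<open>x \<in> ball z \<eta>\<close>]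
      by (simp add: abs_le_iff norm_minus_commute)
  qed
qed

section \<open>The distance to the boundary\<close>

locale bounded_domain =
  fixes \<Omega> :: "'a::euclidean_space set"
  assumes domain_open: "open \<Omega>" and domain_bounded: "bounded \<Omega>" and domain_nonempty: "\<Omega> \<noteq> {}"
begin

abbreviation "d \<equiv> dist_bd \<Omega>"
abbreviation "\<rho> \<equiv> inradius \<Omega>"

lemma frontier_nonempty: "frontier \<Omega> \<noteq> {}"
proof -
  have "\<Omega> \<noteq> UNIV" using domain_bounded by auto
  then show ?thesis
    using connected_Int_frontier[of UNIV \<Omega>] domain_nonempty by auto
qed

lemma compact_closure: "compact (closure \<Omega>)"
  using domain_bounded by (simp add: compact_eq_bounded_closed bounded_closure)

lemma frontier_not_in_domain: "y \<in> frontier \<Omega> \<Longrightarrow> y \<notin> \<Omega>"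
  using domain_open frontier_disjoint_eq by blast

lemma closure_minus_frontier: "x \<in> closure \<Omega> \<Longrightarrow> x \<notin> frontier \<Omega> \<Longrightarrow> x \<in> \<Omega>"
  by (simp add: frontier_def interior_open[OF domain_open])

lemma dist_bd_lipschitz: "d x \<le> d y + dist x y"
  using infdist_triangle_abs[of x "frontier \<Omega>" y] by (simp add: dist_bd_def)

lemma continuous_on_dist_bd: "continuous_on S d"
  unfolding dist_bd_def[abs_def] by (intro continuous_intros)

lemma dist_bd_frontier: "x \<in> frontier \<Omega> \<Longrightarrow> d x = 0"
  by (simp add: dist_bd_def)

lemma dist_bd_pos: "x \<in> \<Omega> \<Longrightarrow> d x > 0"
  unfolding dist_bd_def
  by (rule infdist_pos_not_in_closed) (use frontier_nonempty frontier_not_in_domain in auto)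

lemma dist_bd_le: "y \<in> frontier \<Omega> \<Longrightarrow> d x \<le> dist x y"
  unfolding dist_bd_def by (rule infdist_le)

lemma nearest_frontier_point:
  obtains y where "y \<in> frontier \<Omega>" "d x = dist x y"
  using infdist_attains_inf[OF frontier_closed frontier_nonempty, of x] unfolding dist_bd_def by blast

lemma dist_bd_segment:
  assumes "y \<in> frontier \<Omega>" "d x = dist x y" and "0 \<le> s" "s \<le> 1"
  shows "d (x + s *\<^sub>R (y - x)) = (1 - s) * d x"
proof -
  let ?z = "x + s *\<^sub>R (y - x)"
  have "?z - y = (1 - s) *\<^sub>R (x - y)" by (simp add: algebra_simps)
  then have "dist ?z y = (1 - s) * dist x y"
    using assms(4) by (simp add: dist_norm)
  moreover have "dist x ?z = s * dist x y"
    using assms(3) by (simp add: dist_norm norm_minus_commute)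
  ultimately show ?thesis
    using dist_bd_le[OF assms(1), of ?z] dist_bd_lipschitz[of x ?z] assms(2)
    by (simp add: algebra_simps)
qed

lemma ball_dist_bd_subset: assumes "x \<in> \<Omega>" shows "ball x (d x) \<subseteq> \<Omega>"
proof
  fix z assume z: "z \<in> ball x (d x)"
  show "z \<in> \<Omega>"
  proof (rule ccontr)
    assume "z \<notin> \<Omega>"
    then obtain w where w: "w \<in> closed_segment x z" "w \<in> frontier \<Omega>"
      using connected_Int_frontier[of "closed_segment x z" \<Omega>] assms by auto
    then have "d x \<le> dist x z"
      using dist_bd_le[OF w(2), of x] dist_in_closed_segment[OF w(1)] by (simp add: dist_commute)
    then show False using z by (simp add: dist_commute)
  qed
qed

lemma dist_bd_le_inradius: "x \<in> closure \<Omega> \<Longrightarrow> d x \<le> \<rho>"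
proof -
  assume x: "x \<in> closure \<Omega>"
  have "compact (d ` closure \<Omega>)"
    by (intro compact_continuous_image continuous_on_dist_bd compact_closure)
  then have "bdd_above (d ` closure \<Omega>)"
    by (simp add: compact_imp_bounded bounded_imp_bdd_above)
  then show ?thesis unfolding inradius_def using x by (intro cSup_upper) auto
qed

lemma dist_bd_le_inradius_domain: "x \<in> \<Omega> \<Longrightarrow> d x \<le> \<rho>"
  using dist_bd_le_inradius closure_subset by blast

lemma inradius_pos: "\<rho> > 0"
  using domain_nonempty dist_bd_pos dist_bd_le_inradius_domain by (meson ex_in_conv less_le_trans)

lemma nearest_point_direction:
  assumes "x0 \<in> \<Omega>" "y \<in> frontier \<Omega>" "d x0 = dist x0 y"
  defines "e \<equiv> (1 / d x0) *\<^sub>R (x0 - y)"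
  shows "norm e = 1"
    and "\<And>s. - d x0 \<le> s \<Longrightarrow> s \<le> 0 \<Longrightarrow> d (x0 + s *\<^sub>R e) = d x0 + s"
    and "\<And>s. \<bar>s\<bar> < d x0 \<Longrightarrow> x0 + s *\<^sub>R e \<in> \<Omega>"
proof -
  have d0: "d x0 > 0" using dist_bd_pos[OF assms(1)] .
  show ne: "norm e = 1"
    using assms(3) d0 by (simp add: e_def dist_norm)
  show "d (x0 + s *\<^sub>R e) = d x0 + s" if "- d x0 \<le> s" "s \<le> 0" for s
  proof -
    have "x0 + s *\<^sub>R e = x0 + (- s / d x0) *\<^sub>R (y - x0)"
      by (simp add: e_def algebra_simps)
    then have "d (x0 + s *\<^sub>R e) = (1 - (- s / d x0)) * d x0"
      using dist_bd_segment[OF assms(2,3), of "- s / d x0"] that d0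
      by (simp add: divide_le_eq le_divide_eq)
    also have "\<dots> = d x0 + s" using d0 by (simp add: field_simps)
    finally show ?thesis .
  qed
  show "x0 + s *\<^sub>R e \<in> \<Omega>" if "\<bar>s\<bar> < d x0" for s
    using ball_dist_bd_subset[OF assms(1)] that ne by (auto simp: dist_norm)
qed

lemma dist_bd_gradient:
  assumes "x0 \<in> \<Omega>" and D: "(d has_derivative D) (at x0)"
    and "y \<in> frontier \<Omega>" "d x0 = dist x0 y"
  shows "D = (\<lambda>h. ((1 / d x0) *\<^sub>R (x0 - y)) \<bullet> h)"
proof -
  define e where "e = (1 / d x0) *\<^sub>R (x0 - y)"
  note ray = nearest_point_direction[OF assms(1,3,4), folded e_def]
  have lin: "linear D" using D by (rule has_derivative_linear)
  define w where "w = adjoint D 1"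
  have Dw: "D h = w \<bullet> h" for h
    using adjoint_works[OF lin, of h 1] by (simp add: w_def inner_commute)
  have "d (x0 + t *\<^sub>R w) \<le> d x0 + t * norm w" if "0 < t" for t
    using dist_bd_lipschitz[of "x0 + t *\<^sub>R w" x0] that by (simp add: dist_norm)
  then have "D w \<le> norm w"
    by (intro has_derivative_dir_le[OF D zero_less_one]) auto
  then have "norm w * norm w \<le> norm w * 1"
    by (simp add: Dw power2_norm_eq_inner[symmetric] power2_eq_square)
  then have "norm w \<le> 1"
    by (cases "w = 0") (auto simp: mult_le_cancel_left_pos)
  have "D (- e) \<le> -1"
    by (rule has_derivative_dir_le[OF D dist_bd_pos[OF assms(1)]]) (use ray(2)[of "- _"] in simp)
  then have "w \<bullet> e \<ge> 1" by (simp add: Dw)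
  have "(norm (w - e))\<^sup>2 = (norm w)\<^sup>2 - 2 * (w \<bullet> e) + (norm e)\<^sup>2"
    by (simp add: power2_norm_eq_inner inner_diff_left inner_diff_right inner_commute)
  also have "\<dots> \<le> 0"
    using \<open>norm w \<le> 1\<close> \<open>w \<bullet> e \<ge> 1\<close> ray(1) power_le_one[of "norm w" 2] by simp
  finally have "w = e" by simp
  then show ?thesis using Dw by (auto simp: e_def)
qed

lemma nearest_frontier_point_unique:
  assumes "x \<in> \<Omega>" and "d differentiable (at x)"
    and "y1 \<in> frontier \<Omega>" "d x = dist x y1" and "y2 \<in> frontier \<Omega>" "d x = dist x y2"
  shows "y1 = y2"
proof -
  obtain D where D: "(d has_derivative D) (at x)"
    using assms(2) unfolding differentiable_def by blast
  define v1 where "v1 = (1 / d x) *\<^sub>R (x - y1)"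
  define v2 where "v2 = (1 / d x) *\<^sub>R (x - y2)"
  have "(\<lambda>h. v1 \<bullet> h) = (\<lambda>h. v2 \<bullet> h)"
    using dist_bd_gradient[OF assms(1) D assms(3,4)] dist_bd_gradient[OF assms(1) D assms(5,6)]
    by (simp add: v1_def v2_def)
  from fun_cong[OF this, of "v1 - v2"] have "(v1 - v2) \<bullet> (v1 - v2) = 0"
    by (simp add: inner_diff_left)
  then show ?thesis using dist_bd_pos[OF assms(1)] by (simp add: v1_def v2_def)
qed

definition nearest_point :: "'a \<Rightarrow> 'a" where
  "nearest_point x = (SOME y. y \<in> frontier \<Omega> \<and> d x = dist x y)"

lemma nearest_point: "nearest_point x \<in> frontier \<Omega>" "d x = dist x (nearest_point x)"
proof -
  obtain y where "y \<in> frontier \<Omega>" "d x = dist x y" by (rule nearest_frontier_point)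
  then have "\<exists>y. y \<in> frontier \<Omega> \<and> d x = dist x y" by blast
  from someI_ex[OF this] show "nearest_point x \<in> frontier \<Omega>" "d x = dist x (nearest_point x)"
    unfolding nearest_point_def by auto
qed

lemma continuous_on_nearest_point:
  assumes "U \<subseteq> \<Omega>" and "\<And>w. w \<in> U \<Longrightarrow> d differentiable (at w)"
  shows "continuous_on U nearest_point"
proof -
  have graph: "(\<lambda>x. (x, nearest_point x)) ` U
      = (U \<times> frontier \<Omega>) \<inter> {p. d (fst p) = dist (fst p) (snd p)}"
  proof
    show "(\<lambda>x. (x, nearest_point x)) ` U \<subseteq> (U \<times> frontier \<Omega>) \<inter> {p. d (fst p) = dist (fst p) (snd p)}"
      using nearest_point by auto
    show "(U \<times> frontier \<Omega>) \<inter> {p. d (fst p) = dist (fst p) (snd p)} \<subseteq> (\<lambda>x. (x, nearest_point x)) ` U"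
    proof
      fix p assume p: "p \<in> (U \<times> frontier \<Omega>) \<inter> {p. d (fst p) = dist (fst p) (snd p)}"
      obtain w q where pq: "p = (w, q)" by (cases p)
      have "w \<in> U" "q \<in> frontier \<Omega>" "d w = dist w q" using p pq by auto
      then have "q = nearest_point w"
        using nearest_frontier_point_unique[OF _ assms(2) _ _ nearest_point] assms(1) by blast
      then show "p \<in> (\<lambda>x. (x, nearest_point x)) ` U" using \<open>w \<in> U\<close> pq by auto
    qed
  qed
  have "closed {p :: 'a \<times> 'a. d (fst p) = dist (fst p) (snd p)}"
  proof (intro closed_Collect_eq continuous_intros)
    show "continuous_on UNIV (\<lambda>p::'a \<times> 'a. d (fst p))"
      unfolding dist_bd_def by (intro continuous_intros)
  qed
  then show ?thesis
  proof (subst continuous_closed_graph_eq[OF compact_frontier_bounded[OF domain_bounded]])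
    show "nearest_point \<in> U \<rightarrow> frontier \<Omega>" using nearest_point(1) by blast
    show "closedin (top_of_set (U \<times> frontier \<Omega>)) ((\<lambda>x. (x, nearest_point x)) ` U)"
      if "closed {p :: 'a \<times> 'a. d (fst p) = dist (fst p) (snd p)}"
      unfolding graph by (rule closedin_closed_Int[OF that])
  qed
qed

text \<open>Brouwer's theorem applied to \<open>w \<mapsto> z + s (w - nearest_point w) / d w\<close> produces a point
  \<open>w\<close> whose segment to its nearest boundary point passes through \<open>z\<close>.\<close>
lemma segment_to_nearest_point_through:
  assumes "s > 0" and "cball z s \<subseteq> \<Omega>" and "\<And>w. w \<in> cball z s \<Longrightarrow> d differentiable (at w)"
  obtains w where "w \<in> cball z s" "w = z + (s / d w) *\<^sub>R (w - nearest_point w)"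
proof -
  define \<Phi> where "\<Phi> = (\<lambda>w. z + s *\<^sub>R ((1 / d w) *\<^sub>R (w - nearest_point w)))"
  have dpos: "d w > 0" if "w \<in> cball z s" for w
    using that assms(2) dist_bd_pos by blast
  have "continuous_on (cball z s) \<Phi>"
    unfolding \<Phi>_def
    by (intro continuous_intros continuous_on_dist_bd continuous_on_nearest_point assms(2,3))
      (use dpos in force)
  moreover have "\<Phi> \<in> cball z s \<rightarrow> cball z s"
  proof
    fix w assume "w \<in> cball z s"
    then have "norm ((1 / d w) *\<^sub>R (w - nearest_point w)) = 1"
      using dpos[OF \<open>w \<in> cball z s\<close>] nearest_point(2)[of w] by (simp add: dist_norm)
    then show "\<Phi> w \<in> cball z s" using \<open>s > 0\<close> by (simp add: \<Phi>_def dist_norm)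
  qed
  ultimately obtain w where "w \<in> cball z s" "\<Phi> w = w"
    using brouwer_ball[OF \<open>s > 0\<close>] by blast
  then show thesis by (intro that) (auto simp: \<Phi>_def)
qed

lemma ray_point_in_domain:
  assumes "x0 \<in> \<Omega>" "y \<in> frontier \<Omega>" "d x0 = dist x0 y"
    and "t \<ge> 1" and "d (y + t *\<^sub>R (x0 - y)) = t * d x0"
  shows "y + t *\<^sub>R (x0 - y) \<in> \<Omega>"
proof (rule ccontr)
  define P where "P = (\<lambda>t. y + t *\<^sub>R (x0 - y))"
  assume "P t \<notin> \<Omega>"
  then obtain w where w: "w \<in> closed_segment x0 (P t)" "w \<in> frontier \<Omega>"
    using connected_Int_frontier[of "closed_segment x0 (P t)" \<Omega>] assms(1) by (auto simp: P_def)
  then obtain l where "0 \<le> l" "l \<le> 1" "w = (1 - l) *\<^sub>R x0 + l *\<^sub>R P t"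
    unfolding closed_segment_def by auto
  have "d x0 > 0" using dist_bd_pos[OF assms(1)] .
  define \<mu> where "\<mu> = (1 - l) * (1 - 1 / t)"
  have "0 \<le> 1 - 1 / t" "1 - 1 / t < 1" using \<open>t \<ge> 1\<close> by auto
  then have "0 \<le> \<mu>" "\<mu> < 1"
    using \<open>0 \<le> l\<close> \<open>l \<le> 1\<close> by (auto simp: \<mu>_def intro: le_less_trans[OF mult_left_le_one_le])
  have "x0 = P t + (1 - 1 / t) *\<^sub>R (y - P t)"
    using \<open>t \<ge> 1\<close> by (simp add: P_def algebra_simps)
  then have "w = P t + \<mu> *\<^sub>R (y - P t)"
    unfolding \<open>w = _\<close> \<mu>_def by (subst (1) \<open>x0 = _\<close>) (simp add: algebra_simps)
  moreover have "dist (P t) y = t * d x0"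
    using assms(3,4) by (simp add: P_def dist_norm)
  ultimately have "d w = (1 - \<mu>) * (t * d x0)"
    using dist_bd_segment[OF assms(2), of "P t" \<mu>] assms(5) \<open>0 \<le> \<mu>\<close> \<open>\<mu> < 1\<close> by (simp add: P_def)
  then have "d w > 0" using \<open>\<mu> < 1\<close> \<open>t \<ge> 1\<close> \<open>d x0 > 0\<close> by simp
  then show False using dist_bd_frontier[OF w(2)] by simp
qed

lemma inner_normal_defining_function:
  assumes "inner_normal \<Omega> p \<nu>"
  obtains a r \<psi> where "p \<in> frontier \<Omega>" and "norm \<nu> = 1" and "a > 0" and "r > 0"
    and "(\<psi> has_derivative (\<lambda>h. a * (\<nu> \<bullet> h))) (at p)" and "\<psi> p = 0"
    and "\<And>x. x \<in> ball p r \<Longrightarrow> x \<notin> \<Omega> \<Longrightarrow> \<psi> x \<le> 0"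
proof -
  obtain r \<psi> D\<psi> where "p \<in> frontier \<Omega>" "r > 0"
    and d\<psi>: "\<forall>x\<in>ball p r. (\<psi> has_derivative (\<lambda>h. D\<psi> x \<bullet> h)) (at x)"
    and nz: "\<forall>x\<in>ball p r. D\<psi> x \<noteq> 0"
    and loc: "\<Omega> \<inter> ball p r = {x \<in> ball p r. \<psi> x > 0}"
    and \<nu>: "\<nu> = D\<psi> p /\<^sub>R norm (D\<psi> p)"
    using assms unfolding inner_normal_def by blast
  define a where "a = norm (D\<psi> p)"
  have "a > 0" using nz \<open>r > 0\<close> by (simp add: a_def)
  have "a * (\<nu> \<bullet> h) = D\<psi> p \<bullet> h" for h
    using \<open>a > 0\<close> by (simp add: \<nu> a_def)
  then have deriv: "(\<psi> has_derivative (\<lambda>h. a * (\<nu> \<bullet> h))) (at p)"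
    using d\<psi> \<open>r > 0\<close> by simp
  have outside: "\<psi> x \<le> 0" if "x \<in> ball p r" "x \<notin> \<Omega>" for x
    using loc that by (auto simp: not_le[symmetric])
  have "continuous_on (ball p r) \<psi>"
    using d\<psi> has_derivative_continuous by (blast intro: continuous_at_imp_continuous_on)
  moreover have "closure (\<Omega> \<inter> ball p (r / 2)) \<subseteq> cball p (r / 2)"
    by (rule closure_minimal) auto
  ultimately have cont: "continuous_on (closure (\<Omega> \<inter> ball p (r / 2))) \<psi>"
    using \<open>r > 0\<close> by (auto elim!: continuous_on_subset)
  have "p \<in> closure (\<Omega> \<inter> ball p (r / 2))"
    using open_Int_closure_subset[of "ball p (r / 2)" \<Omega>] \<open>p \<in> frontier \<Omega>\<close> \<open>r > 0\<close>
    by (auto simp: frontier_def Int_commute)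
  moreover have "\<psi> x \<ge> 0" if "x \<in> \<Omega> \<inter> ball p (r / 2)" for x
  proof -
    have "x \<in> \<Omega> \<inter> ball p r" using that \<open>r > 0\<close> by auto
    then show ?thesis using loc by auto
  qed
  ultimately have "\<psi> p \<ge> 0"
    by (rule continuous_ge_on_closure[OF cont])
  moreover have "\<psi> p \<le> 0"
    using outside \<open>r > 0\<close> frontier_not_in_domain[OF \<open>p \<in> frontier \<Omega>\<close>] by simp
  moreover have "norm \<nu> = 1" using \<open>a > 0\<close> by (simp add: \<nu> a_def)
  ultimately show thesis
    using that[OF \<open>p \<in> frontier \<Omega>\<close> _ \<open>a > 0\<close> \<open>r > 0\<close> deriv _ outside] by simp
qed

text \<open>The nearest boundary point \<open>q\<close> to \<open>p + t \<nu>\<close> lies within \<open>2t\<close> of \<open>p\<close>, where the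
  defining function is \<open>\<le> 0\<close>; its linearization shows that \<open>q\<close> is only \<open>o(t)\<close> above the
  tangent plane, so \<open>d (p + t \<nu>) \<ge> \<nu> \<bullet> (p + t \<nu> - q) = t - o(t)\<close>.\<close>
lemma dist_bd_along_inner_normal:
  assumes "inner_normal \<Omega> p \<nu>"
  shows "((\<lambda>t. d (p + t *\<^sub>R \<nu>) / t) \<longlongrightarrow> 1) (at_right 0)"
proof -
  obtain a r \<psi> where "p \<in> frontier \<Omega>" "norm \<nu> = 1" "a > 0" "r > 0"
    and d\<psi>: "(\<psi> has_derivative (\<lambda>h. a * (\<nu> \<bullet> h))) (at p)" and "\<psi> p = 0"
    and outside: "\<And>x. x \<in> ball p r \<Longrightarrow> x \<notin> \<Omega> \<Longrightarrow> \<psi> x \<le> 0"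
    using inner_normal_defining_function[OF assms] by metis
  show ?thesis
    unfolding tendsto_iff
  proof (intro allI impI)
    fix \<epsilon> :: real assume "\<epsilon> > 0"
    have "\<forall>e>0. \<exists>\<delta>>0. \<forall>q. norm (q - p) < \<delta> \<longrightarrow>
        \<bar>\<psi> q - \<psi> p - a * (\<nu> \<bullet> (q - p))\<bar> \<le> e * norm (q - p)"
      using d\<psi> by (simp add: has_derivative_at_alt)
    moreover have "\<epsilon> * a / 4 > 0" using \<open>\<epsilon> > 0\<close> \<open>a > 0\<close> by simp
    ultimately obtain \<delta> where "\<delta> > 0" and lin: "\<And>q. norm (q - p) < \<delta> \<Longrightarrow>
        \<bar>\<psi> q - \<psi> p - a * (\<nu> \<bullet> (q - p))\<bar> \<le> (\<epsilon> * a / 4) * norm (q - p)"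
      by blast
    show "\<forall>\<^sub>F t in at_right 0. dist (d (p + t *\<^sub>R \<nu>) / t) 1 < \<epsilon>"
      unfolding eventually_at_right_field
    proof (intro exI[of _ "min (\<delta>/2) (r/2)"] conjI allI impI)
      fix t :: real assume t: "0 < t" "t < min (\<delta>/2) (r/2)"
      define x where "x = p + t *\<^sub>R \<nu>"
      obtain q where q: "q \<in> frontier \<Omega>" "d x = dist x q" by (rule nearest_frontier_point)
      have "dist x p = t" using t \<open>norm \<nu> = 1\<close> by (simp add: x_def dist_norm)
      then have "d x \<le> t" using dist_bd_le[OF \<open>p \<in> frontier \<Omega>\<close>, of x] by simp
      have "norm (q - p) \<le> dist q x + dist x p" by (metis dist_norm dist_triangle)
      then have qp: "norm (q - p) \<le> 2 * t"
        using q \<open>d x \<le> t\<close> \<open>dist x p = t\<close> by (simp add: dist_commute)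
      then have "\<psi> q \<le> 0"
        using outside[OF _ frontier_not_in_domain[OF q(1)]] t by (simp add: dist_norm norm_minus_commute)
      moreover have "\<bar>\<psi> q - \<psi> p - a * (\<nu> \<bullet> (q - p))\<bar> \<le> (\<epsilon> * a / 4) * norm (q - p)"
        using lin qp t by simp
      moreover have "(\<epsilon> * a / 4) * norm (q - p) \<le> (\<epsilon> * a / 4) * (2 * t)"
        using qp \<open>\<epsilon> * a / 4 > 0\<close> by (intro mult_left_mono) auto
      ultimately have "a * (\<nu> \<bullet> (q - p)) \<le> (\<epsilon> * a / 4) * (2 * t)"
        using \<open>\<psi> p = 0\<close> abs_ge_minus_self[of "\<psi> q - \<psi> p - a * (\<nu> \<bullet> (q - p))"] by linarith
      also have "\<dots> = a * (\<epsilon> * t / 2)" by simp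
      finally have "\<nu> \<bullet> (q - p) \<le> \<epsilon> * t / 2" using \<open>a > 0\<close> by simp
      have "\<nu> \<bullet> (x - q) \<le> d x"
        using norm_cauchy_schwarz[of \<nu> "x - q"] q(2) \<open>norm \<nu> = 1\<close> by (simp add: dist_norm)
      moreover have "\<nu> \<bullet> (x - q) = t - \<nu> \<bullet> (q - p)"
        using \<open>norm \<nu> = 1\<close> by (simp add: x_def inner_diff_right power2_norm_eq_inner[symmetric] algebra_simps)
      ultimately have "t - \<epsilon> * t / 2 \<le> d x" using \<open>\<nu> \<bullet> (q - p) \<le> \<epsilon> * t / 2\<close> by linarith
      then have "1 - \<epsilon> / 2 \<le> d x / t" using t by (simp add: field_simps)
      moreover have "d x / t \<le> 1" using \<open>d x \<le> t\<close> t by simp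
      ultimately show "dist (d (p + t *\<^sub>R \<nu>) / t) 1 < \<epsilon>"
        using \<open>\<epsilon> > 0\<close> by (simp add: x_def[symmetric] dist_real_def)
    qed (use \<open>\<delta> > 0\<close> \<open>r > 0\<close> in simp)
  qed
qed

lemma normal_derivative_prof_dist_bd:
  assumes "inner_normal \<Omega> p \<nu>" and "R > 0"
  shows "((\<lambda>t. (prof R (d (p + t *\<^sub>R \<nu>)) - prof R (d p)) / t) \<longlongrightarrow> (3 * R) powr (1/3)) (at_right 0)"
proof -
  have "p \<in> frontier \<Omega>" using assms(1) unfolding inner_normal_def by blast
  have "((\<lambda>t. prof R (d (p + t *\<^sub>R \<nu>)) / t) \<longlongrightarrow> prof_deriv R 0) (at_right 0)"
    by (rule tendsto_comp_ratio[OF prof_has_derivative[OF \<open>R > 0\<close>] prof_zero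
          dist_bd_along_inner_normal[OF assms(1)]])
  then show ?thesis
    using prof_deriv_zero[of R] \<open>R > 0\<close> dist_bd_frontier[OF \<open>p \<in> frontier \<Omega>\<close>] by simp
qed

end

section \<open>Upper and lower comparison functions\<close>

context bounded_domain
begin

lemma continuous_on_prof_dist_bd:
  "(\<And>x. x \<in> S \<Longrightarrow> d x \<le> R) \<Longrightarrow> continuous_on S (\<lambda>x. prof R (d x))"
  unfolding prof_def by (intro continuous_intros continuous_on_powr' continuous_on_dist_bd) auto

text \<open>At an interior maximum of \<open>u - \<kappa> prof R \<circ> d\<close> (\<open>\<kappa> > 1\<close>, \<open>R > \<rho>\<close>) the strict
  supersolution \<open>\<kappa> prof R (|x - y|)\<close>, \<open>y\<close> a nearest boundary point, would touch \<open>u\<close> from above.\<close>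
lemma dirichlet_le_scaled_prof:
  assumes u: "dirichlet_visc_sol \<Omega> u" and "\<kappa> > 1" and "R > \<rho>" and "x \<in> closure \<Omega>"
  shows "u x \<le> \<kappa> * prof R (d x)"
proof (rule ccontr)
  assume neg: "\<not> u x \<le> \<kappa> * prof R (d x)"
  have ucont: "continuous_on (closure \<Omega>) u" and u0: "\<And>x. x \<in> frontier \<Omega> \<Longrightarrow> u x = 0"
    and sub: "visc_subsol \<Omega> u"
    using u unfolding dirichlet_visc_sol_def visc_sol_def by auto
  have "continuous_on (closure \<Omega>) (\<lambda>x. \<kappa> * prof R (d x))"
    using dist_bd_le_inradius \<open>R > \<rho>\<close> by (intro continuous_intros continuous_on_prof_dist_bd) force
  then obtain x1 where "x1 \<in> closure \<Omega>"
    and max: "\<And>z. z \<in> closure \<Omega> \<Longrightarrow> u z - \<kappa> * prof R (d z) \<le> u x1 - \<kappa> * prof R (d x1)"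
    using continuous_attains_sup[OF compact_closure _ continuous_on_diff[OF ucont]] domain_nonempty
    by (metis closure_eq_empty)
  have pos: "u x1 - \<kappa> * prof R (d x1) > 0"
    using max[OF \<open>x \<in> closure \<Omega>\<close>] neg by simp
  then have "x1 \<in> \<Omega>"
    using closure_minus_frontier[OF \<open>x1 \<in> closure \<Omega>\<close>] u0 dist_bd_frontier by force
  obtain y where y: "y \<in> frontier \<Omega>" "d x1 = dist x1 y" by (rule nearest_frontier_point)
  define r1 where "r1 = norm (x1 - y)"
  have r1: "r1 = d x1" using y by (simp add: r1_def dist_norm)
  have "r1 < R" using r1 dist_bd_le_inradius[OF \<open>x1 \<in> closure \<Omega>\<close>] \<open>R > \<rho>\<close> by simp
  show False
  proof (rule visc_subsol_not_touched_above_by_radial[OF sub \<open>x1 \<in> \<Omega>\<close>, where c = y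
        and e = "R - r1" and g = "\<lambda>r. \<kappa> * prof R r" and g' = "\<lambda>r. \<kappa> * prof_deriv R r"
        and g'' = "\<kappa> * prof_deriv2 R r1"])
    show "x1 \<noteq> y" using \<open>x1 \<in> \<Omega>\<close> y frontier_not_in_domain by auto
    show "((\<lambda>r. \<kappa> * prof R r) has_real_derivative \<kappa> * prof_deriv R r) (at r)"
      if "\<bar>r - norm (x1 - y)\<bar> < R - r1" for r
      using that by (intro DERIV_cmult prof_has_derivative) (auto simp: r1_def)
    show "((\<lambda>r. \<kappa> * prof_deriv R r) has_real_derivative \<kappa> * prof_deriv2 R r1) (at (norm (x1 - y)))"
      unfolding r1_def by (intro DERIV_cmult prof_deriv_has_derivative) (use \<open>r1 < R\<close> in \<open>simp add: r1_def\<close>)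
    have "\<kappa> ^ 3 > 1" using \<open>\<kappa> > 1\<close> by (simp add: one_less_power)
    then show "(\<kappa> * prof_deriv R (norm (x1 - y)))\<^sup>2 * (\<kappa> * prof_deriv2 R r1) < -1"
      using prof_ode[OF \<open>r1 < R\<close>] by (simp add: r1_def[symmetric] power2_eq_square power3_eq_cube mult_ac)
    fix z assume "z \<in> \<Omega>" "dist z x1 < R - r1"
    then have "norm (z - y) \<le> R"
      using norm_triangle_ineq[of "z - x1" "x1 - y"] by (simp add: r1_def dist_norm)
    then have "\<kappa> * prof R (d z) \<le> \<kappa> * prof R (norm (z - y))"
      using dist_bd_le[OF y(1), of z] \<open>\<kappa> > 1\<close> by (intro mult_left_mono prof_mono) (auto simp: dist_norm)
    then show "u z - \<kappa> * prof R (norm (z - y)) \<le> u x1 - \<kappa> * prof R (norm (x1 - y))"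
      using max[of z] \<open>z \<in> \<Omega>\<close> closure_subset r1 r1_def by force
  qed (use \<open>r1 < R\<close> in auto)
qed

lemma dirichlet_le_phi:
  assumes u: "dirichlet_visc_sol \<Omega> u" and "x \<in> closure \<Omega>"
  shows "u x \<le> prof \<rho> (d x)"
proof (rule tendsto_lowerbound)
  have pos: "\<forall>\<^sub>F \<epsilon> in at_right 0. 0 < (\<epsilon>::real)"
    by (simp add: eventually_at_right_less)
  have "((\<lambda>\<epsilon>. (1 + \<epsilon>) * prof (\<rho> + \<epsilon>) (d x)) \<longlongrightarrow> (1 + 0) * prof (\<rho> + 0) (d x)) (at_right 0)"
    using inradius_pos dist_bd_le_inradius[OF \<open>x \<in> closure \<Omega>\<close>]
    by (intro tendsto_intros tendsto_prof) (use pos in \<open>auto elim: eventually_mono\<close>)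
  then show "((\<lambda>\<epsilon>. (1 + \<epsilon>) * prof (\<rho> + \<epsilon>) (d x)) \<longlongrightarrow> prof \<rho> (d x)) (at_right 0)"
    by simp
  show "\<forall>\<^sub>F \<epsilon> in at_right 0. u x \<le> (1 + \<epsilon>) * prof (\<rho> + \<epsilon>) (d x)"
    using pos dirichlet_le_scaled_prof[OF u _ _ \<open>x \<in> closure \<Omega>\<close>] by (auto elim: eventually_mono)
qed simp

lemma dirichlet_nonneg:
  assumes u: "dirichlet_visc_sol \<Omega> u" and "x \<in> closure \<Omega>"
  shows "u x \<ge> 0"
proof (rule ccontr)
  assume "\<not> u x \<ge> 0"
  have ucont: "continuous_on (closure \<Omega>) u" and u0: "\<And>x. x \<in> frontier \<Omega> \<Longrightarrow> u x = 0"
    and super: "visc_supersol \<Omega> u"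
    using u unfolding dirichlet_visc_sol_def visc_sol_def by auto
  obtain x1 where "x1 \<in> closure \<Omega>" and min: "\<And>z. z \<in> closure \<Omega> \<Longrightarrow> u x1 \<le> u z"
    using continuous_attains_inf[OF compact_closure _ ucont] domain_nonempty
    by (metis closure_eq_empty)
  have "u x1 < 0" using min[OF \<open>x \<in> closure \<Omega>\<close>] \<open>\<not> u x \<ge> 0\<close> by simp
  then have "x1 \<in> \<Omega>"
    using closure_minus_frontier[OF \<open>x1 \<in> closure \<Omega>\<close>] u0 by force
  moreover have "local_min_at \<Omega> u x1"
    unfolding local_min_at_def using min closure_subset by (intro exI[of _ 1]) auto
  ultimately show False using visc_supersol_no_local_min[OF super] by blast
qed

lemma radial_barrier_min_at_center:
  assumes u: "dirichlet_visc_sol \<Omega> u" and "cball c R \<subseteq> \<Omega>" and "0 < \<mu>" "\<mu> < 1"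
    and "x1 \<in> cball c R"
    and min: "\<And>x. x \<in> cball c R \<Longrightarrow>
      u x1 - \<mu> * prof R (R - norm (x1 - c)) \<le> u x - \<mu> * prof R (R - norm (x - c))"
    and neg: "u x1 - \<mu> * prof R (R - norm (x1 - c)) < 0"
  shows "x1 = c"
proof (rule ccontr)
  assume "x1 \<noteq> c"
  define r1 where "r1 = norm (x1 - c)"
  have "r1 > 0" using \<open>x1 \<noteq> c\<close> by (simp add: r1_def)
  have "x1 \<in> \<Omega>" using assms(2,5) by blast
  have "r1 < R"
  proof (rule ccontr)
    assume "\<not> r1 < R"
    then have "r1 = R" using \<open>x1 \<in> cball c R\<close> by (simp add: r1_def dist_norm norm_minus_commute)
    then show False
      using neg dirichlet_nonneg[OF u] \<open>x1 \<in> \<Omega>\<close> closure_subset by (force simp: r1_def)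
  qed
  show False
  proof (rule visc_supersol_not_touched_below_by_radial[where c = c and e = "min r1 (R - r1)"
        and g = "\<lambda>r. \<mu> * prof R (R - r)" and g' = "\<lambda>r. \<mu> * - prof_deriv R (R - r)"
        and g'' = "\<mu> * prof_deriv2 R (R - r1)"])
    show "visc_supersol \<Omega> u" using u unfolding dirichlet_visc_sol_def visc_sol_def by blast
    show "((\<lambda>r. \<mu> * prof R (R - r)) has_real_derivative \<mu> * - prof_deriv R (R - r)) (at r)"
      if "\<bar>r - norm (x1 - c)\<bar> < min r1 (R - r1)" for r
      using that by (intro DERIV_cmult prof_reflect_has_derivative) (auto simp: r1_def)
    show "((\<lambda>r. \<mu> * - prof_deriv R (R - r)) has_real_derivative \<mu> * prof_deriv2 R (R - r1))
        (at (norm (x1 - c)))"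
      unfolding r1_def
      by (intro DERIV_cmult prof_deriv_reflect_has_derivative) (use \<open>r1 > 0\<close> in \<open>simp add: r1_def\<close>)
    have "\<mu> ^ 3 < 1" using assms(3,4) by (simp add: power_less_one_iff)
    then show "(\<mu> * - prof_deriv R (R - norm (x1 - c)))\<^sup>2 * (\<mu> * prof_deriv2 R (R - r1)) > -1"
      using prof_ode[of "R - r1" R] \<open>r1 > 0\<close>
      by (simp add: r1_def[symmetric] power2_eq_square power3_eq_cube mult_ac)
    fix x assume "x \<in> \<Omega>" "dist x x1 < min r1 (R - r1)"
    then have "x \<in> cball c R"
      using norm_triangle_ineq[of "x - x1" "x1 - c"] by (simp add: r1_def dist_norm norm_minus_commute)
    then show "u x1 - \<mu> * prof R (R - norm (x1 - c)) \<le> u x - \<mu> * prof R (R - norm (x - c))"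
      by (rule min)
  qed (use \<open>x1 \<in> \<Omega>\<close> \<open>x1 \<noteq> c\<close> \<open>r1 > 0\<close> \<open>r1 < R\<close> in auto)
qed

text \<open>The minimum of \<open>u\<close> minus the radial profile, if negative, can only sit at the center.\<close>
lemma radial_barrier_or_power_bound:
  assumes u: "dirichlet_visc_sol \<Omega> u" and "cball c R \<subseteq> \<Omega>" and "R > 0" and "0 < \<mu>" "\<mu> < 1"
  shows "(\<forall>x\<in>cball c R. \<mu> * prof R (R - norm (x - c)) \<le> u x) \<or>
    (\<forall>x\<in>cball c R. u c - \<mu> * prof_const * norm (x - c) powr (4/3) \<le> u x)"
proof -
  have cont: "continuous_on (cball c R) (\<lambda>x. u x - \<mu> * prof R (R - norm (x - c)))"
  proof -
    have "continuous_on (closure \<Omega>) u"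
      using u unfolding dirichlet_visc_sol_def by blast
    then have "continuous_on (cball c R) u"
      by (rule continuous_on_subset) (use assms(2) closure_subset in blast)
    then show ?thesis
      unfolding prof_reflect using \<open>R > 0\<close>
      by (intro continuous_intros continuous_on_powr') auto
  qed
  obtain x1 where "x1 \<in> cball c R" and min: "\<And>x. x \<in> cball c R \<Longrightarrow>
      u x1 - \<mu> * prof R (R - norm (x1 - c)) \<le> u x - \<mu> * prof R (R - norm (x - c))"
    using continuous_attains_inf[OF compact_cball _ cont] \<open>R > 0\<close> by fastforce
  show ?thesis
  proof (cases "u x1 - \<mu> * prof R (R - norm (x1 - c)) < 0")
    case True
    then have "x1 = c"
      using radial_barrier_min_at_center[OF u assms(2,4,5) \<open>x1 \<in> cball c R\<close>] min by blast
    then have "u c - \<mu> * prof_const * norm (x - c) powr (4/3) \<le> u x" if "x \<in> cball c R" for x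
      using min[OF that] by (simp add: prof_reflect prof_top algebra_simps)
    then show ?thesis by blast
  next
    case False
    then show ?thesis using min by force
  qed
qed

text \<open>If the radial barrier failed around every center near \<open>z\<close>, the lower bounds of order
  \<open>4/3 > 1\<close> at all these centers would make \<open>u\<close> locally constant; but a supersolution has no
  local minimum.\<close>
lemma radial_barrier:
  assumes u: "dirichlet_visc_sol \<Omega> u" and "ball z r0 \<subseteq> \<Omega>" and "R > 0" and "\<epsilon> > 0"
    and "R + \<epsilon> \<le> r0" and "0 < \<mu>" "\<mu> < 1"
  shows "\<exists>c\<in>ball z \<epsilon>. \<forall>x\<in>cball c R. \<mu> * prof R (R - norm (x - c)) \<le> u x"
proof (rule ccontr)
  assume no_barrier: "\<not> ?thesis"
  have power_bound: "u c - \<mu> * prof_const * norm (x - c) powr (4/3) \<le> u x"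
    if "c \<in> ball z \<epsilon>" "x \<in> cball c R" for c x
  proof -
    have "cball c R \<subseteq> \<Omega>"
    proof
      fix w assume "w \<in> cball c R"
      have "dist z w \<le> dist z c + dist c w" by (rule dist_triangle)
      also have "\<dots> < r0" using that(1) \<open>w \<in> cball c R\<close> assms(5) by simp
      finally show "w \<in> \<Omega>" using assms(2) by auto
    qed
    then show ?thesis
      using radial_barrier_or_power_bound[OF u _ assms(3,6,7)] no_barrier that by blast
  qed
  define \<eta> where "\<eta> = min \<epsilon> (R / 2)"
  have "\<eta> > 0" using assms(3,4) by (simp add: \<eta>_def)
  have "\<exists>C. \<forall>x\<in>ball z \<eta>. u x = C"
  proof (rule constant_on_ball_of_power_bound[where \<alpha> = "4/3" and K = "\<mu> * prof_const"])
    fix c x assume "c \<in> ball z \<eta>" "x \<in> ball z \<eta>"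
    then have "c \<in> ball z \<epsilon>" "x \<in> cball c R"
      using dist_triangle[of c x z] by (auto simp: \<eta>_def dist_commute)
    then show "u c - \<mu> * prof_const * norm (x - c) powr (4/3) \<le> u x" by (rule power_bound)
  qed simp
  then obtain C where C: "\<And>x. x \<in> ball z \<eta> \<Longrightarrow> u x = C" by blast
  have "z \<in> \<Omega>" using assms(2-5) by auto
  moreover have "local_min_at \<Omega> u z"
    unfolding local_min_at_def using C \<open>\<eta> > 0\<close> by (intro exI[of _ \<eta>]) auto
  ultimately show False
    using visc_supersol_no_local_min u unfolding dirichlet_visc_sol_def visc_sol_def by blast
qed

end

section \<open>\<open>prof \<rho> \<circ> d\<close> is a viscosity solution\<close>

locale ridge_domain = bounded_domain +
  assumes cut_locus_subset_high_ridge: "cut_locus \<Omega> \<subseteq> high_ridge \<Omega>"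
begin

abbreviation "phi \<equiv> \<lambda>x. prof \<rho> (d x)"

lemma phi_Omega_eq: "phi_Omega \<Omega> = phi"
  by (simp add: fun_eq_iff phi_Omega_def prof_def prof_const_def)

lemma dist_bd_differentiable: "x \<in> \<Omega> \<Longrightarrow> d x < \<rho> \<Longrightarrow> d differentiable (at x)"
  using cut_locus_subset_high_ridge closure_subset[of "singular_set \<Omega>"]
  unfolding cut_locus_def singular_set_def high_ridge_def by fastforce

lemma phi_has_derivative_regular:
  assumes "x0 \<in> \<Omega>" "d x0 < \<rho>" "y \<in> frontier \<Omega>" "d x0 = dist x0 y"
  shows "(phi has_derivative (\<lambda>h. (prof_deriv \<rho> (d x0) *\<^sub>R ((1 / d x0) *\<^sub>R (x0 - y))) \<bullet> h)) (at x0)"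
proof -
  obtain D where D: "(d has_derivative D) (at x0)"
    using dist_bd_differentiable[OF assms(1,2)] unfolding differentiable_def by blast
  then have "(d has_derivative (\<lambda>h. ((1 / d x0) *\<^sub>R (x0 - y)) \<bullet> h)) (at x0)"
    using dist_bd_gradient[OF assms(1) D assms(3,4)] by simp
  from DERIV_compose_FDERIV[OF prof_has_derivative[OF assms(2)] this] show ?thesis
    by (simp add: mult.commute)
qed

lemma phi_le_ridge: "x \<in> \<Omega> \<Longrightarrow> d x0 = \<rho> \<Longrightarrow> phi x \<le> phi x0"
  using dist_bd_le_inradius_domain[of x] prof_const_pos
  by (simp add: prof_def)

lemma phi_ridge_bound:
  assumes "x0 \<in> \<Omega>" "d x0 = \<rho>" "x \<in> \<Omega>"
  shows "phi x0 - prof_const * norm (x - x0) powr (4/3) \<le> phi x"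
proof -
  have "\<rho> - d x \<le> norm (x - x0)"
    using dist_bd_lipschitz[of x0 x] assms(2) by (simp add: dist_norm norm_minus_commute)
  then have "(\<rho> - d x) powr (4/3) \<le> norm (x - x0) powr (4/3)"
    using dist_bd_le_inradius_domain[OF assms(3)] by (intro powr_mono2) auto
  then show ?thesis
    using assms(2) prof_const_pos by (simp add: prof_def algebra_simps)
qed

lemma phi_has_derivative_ridge:
  assumes "x0 \<in> \<Omega>" "d x0 = \<rho>"
  shows "(phi has_derivative (\<lambda>h. 0 \<bullet> h)) (at x0)"
proof -
  have "(phi has_derivative (\<lambda>h. 0)) (at x0 within UNIV)"
  proof (rule has_derivative_zero_of_power_bound[where \<alpha> = "4/3" and K = prof_const])
    fix x assume "norm (x - x0) < d x0"
    then have "x \<in> \<Omega>"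
      using ball_dist_bd_subset[OF assms(1)] by (auto simp: dist_norm norm_minus_commute)
    then show "\<bar>phi x - phi x0\<bar> \<le> prof_const * norm (x - x0) powr (4/3)"
      using phi_ridge_bound[OF assms \<open>x \<in> \<Omega>\<close>] phi_le_ridge[OF \<open>x \<in> \<Omega>\<close> assms(2)]
      by (simp add: abs_le_iff)
  qed (use dist_bd_pos[OF assms(1)] in auto)
  then show ?thesis by simp
qed

lemma phi_subsol_regular:
  assumes "x0 \<in> \<Omega>" "d x0 < \<rho>" "C2_on \<Omega> \<psi> G H" "local_min_at \<Omega> (\<lambda>x. \<psi> x - phi x) x0"
  shows "- inf_lap G H x0 \<le> 1"
proof -
  obtain y where y: "y \<in> frontier \<Omega>" "d x0 = dist x0 y" by (rule nearest_frontier_point)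
  note ray = nearest_point_direction[OF assms(1) y]
  have "(prof_deriv \<rho> (d x0 + 0))\<^sup>2 * prof_deriv2 \<rho> (d x0) \<le> inf_lap G H x0"
  proof (rule inf_lap_ge_of_local_min_along_line[OF domain_open assms(3,1) ray(1) assms(4)
        _ _ ray(3), where a = "min (d x0) (\<rho> - d x0)" and p = "\<lambda>s. prof \<rho> (d x0 + s)"])
    show "(phi has_derivative (\<lambda>h. (prof_deriv \<rho> (d x0 + 0) *\<^sub>R ((1 / d x0) *\<^sub>R (x0 - y))) \<bullet> h)) (at x0)"
      using phi_has_derivative_regular[OF assms(1,2) y] by simp
    show "((\<lambda>s. prof \<rho> (d x0 + s)) has_real_derivative prof_deriv \<rho> (d x0 + s)) (at s)"
      if "\<bar>s\<bar> < min (d x0) (\<rho> - d x0)" for s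
      using that by (intro prof_shift_has_derivative) auto
    show "((\<lambda>s. prof_deriv \<rho> (d x0 + s)) has_real_derivative prof_deriv2 \<rho> (d x0)) (at 0)"
      using prof_deriv_shift_has_derivative[of "d x0" 0 \<rho>] assms(2) by simp
  qed (use assms(2) dist_bd_pos[OF assms(1)] ray(2) in auto)
  then show ?thesis using prof_ode[OF assms(2)] by simp
qed

lemma phi_supersol_regular:
  assumes "x0 \<in> \<Omega>" "d x0 < \<rho>" "C2_on \<Omega> \<psi> G H" "local_max_at \<Omega> (\<lambda>x. \<psi> x - phi x) x0"
  shows "- inf_lap G H x0 \<ge> 1"
proof -
  obtain y where y: "y \<in> frontier \<Omega>" "d x0 = dist x0 y" by (rule nearest_frontier_point)
  note ray = nearest_point_direction[OF assms(1) y]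
  have "inf_lap G H x0 \<le> (prof_deriv \<rho> (d x0 + 0))\<^sup>2 * prof_deriv2 \<rho> (d x0)"
  proof (rule inf_lap_le_of_local_max_along_line[OF domain_open assms(3,1) ray(1) assms(4)
        _ _ ray(3), where a = "min (d x0) (\<rho> - d x0)" and p = "\<lambda>s. prof \<rho> (d x0 + s)"])
    show "(phi has_derivative (\<lambda>h. (prof_deriv \<rho> (d x0 + 0) *\<^sub>R ((1 / d x0) *\<^sub>R (x0 - y))) \<bullet> h)) (at x0)"
      using phi_has_derivative_regular[OF assms(1,2) y] by simp
    show "((\<lambda>s. prof \<rho> (d x0 + s)) has_real_derivative prof_deriv \<rho> (d x0 + s)) (at s)"
      if "\<bar>s\<bar> < min (d x0) (\<rho> - d x0)" for s
      using that by (intro prof_shift_has_derivative) auto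
    show "((\<lambda>s. prof_deriv \<rho> (d x0 + s)) has_real_derivative prof_deriv2 \<rho> (d x0)) (at 0)"
      using prof_deriv_shift_has_derivative[of "d x0" 0 \<rho>] assms(2) by simp
  qed (use assms(2) dist_bd_pos[OF assms(1)] ray(2) in auto)
  then show ?thesis using prof_ode[OF assms(2)] by simp
qed

lemma phi_subsol_ridge:
  assumes "x0 \<in> \<Omega>" "d x0 = \<rho>" "C2_on \<Omega> \<psi> G H" "local_min_at \<Omega> (\<lambda>x. \<psi> x - phi x) x0"
  shows "- inf_lap G H x0 \<le> 1"
proof -
  have "(\<psi> has_derivative (\<lambda>h. G x0 \<bullet> h)) (at x0)"
    using assms(1,3) unfolding C2_on_def by blast
  then have "G x0 = 0"
    using gradient_eq_of_local_min phi_has_derivative_ridge[OF assms(1,2)]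
      local_min_at_imp_eventually[OF domain_open assms(1,4)] by blast
  then show ?thesis by (simp add: inf_lap_def)
qed

text \<open>No \<open>C\<^sup>2\<close> function touches \<open>phi\<close> from above at a ridge point: along the ray to a nearest
  boundary point \<open>phi\<close> falls off like \<open>-|s|\<^sup>4\<^sup>/\<^sup>3\<close>, faster than any parabola.\<close>
lemma phi_not_touched_above_at_ridge:
  assumes "x0 \<in> \<Omega>" "d x0 = \<rho>" and C2: "C2_on \<Omega> \<psi> G H"
    and max: "local_max_at \<Omega> (\<lambda>x. \<psi> x - phi x) x0"
  shows False
proof -
  have d\<psi>: "(\<psi> has_derivative (\<lambda>h. G x0 \<bullet> h)) (at x0)"
    using assms(1) C2 unfolding C2_on_def by blast
  obtain r where "r > 0" and r: "\<And>z. z \<in> \<Omega> \<inter> ball x0 r \<Longrightarrow> \<psi> z - phi z \<le> \<psi> x0 - phi x0"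
    using max unfolding local_max_at_def by blast
  have "eventually (\<lambda>z. phi x0 - \<psi> x0 \<le> phi z - \<psi> z) (at x0)"
    using local_min_at_imp_eventually[OF domain_open assms(1), of "\<lambda>z. phi z - \<psi> z"] max
    unfolding local_min_at_def local_max_at_def by force
  then have "G x0 = 0"
    using gradient_eq_of_local_min[OF phi_has_derivative_ridge[OF assms(1,2)] d\<psi>] by simp
  obtain y where y: "y \<in> frontier \<Omega>" "d x0 = dist x0 y" by (rule nearest_frontier_point)
  define e where "e = (1 / d x0) *\<^sub>R (x0 - y)"
  note ray = nearest_point_direction[OF assms(1) y, folded e_def]
  define M where "M = \<bar>H x0 e \<bullet> e\<bar> + 1"
  have "M > 0" by (simp add: M_def add_nonneg_pos)
  have "H x0 e \<bullet> e \<le> - 2 * M"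
  proof (rule hessian_le_along_line[OF C2 assms(1) dist_bd_pos[OF assms(1)] ray(3),
        where p = "\<lambda>s. - M * s\<^sup>2" and p' = "\<lambda>s. - 2 * M * s"
        and \<delta> = "min r (min (d x0) ((prof_const / M) powr (3/2)))"])
    show "\<psi> (x0 + s *\<^sub>R e) - - M * s\<^sup>2 \<le> \<psi> x0 - - M * 0\<^sup>2"
      if s: "- min r (min (d x0) ((prof_const / M) powr (3/2))) < s" "s < 0" for s
    proof -
      have "d (x0 + s *\<^sub>R e) = \<rho> + s"
        using ray(2)[of s] s assms(2) by simp
      then have "phi (x0 + s *\<^sub>R e) = phi x0 - prof_const * (- s) powr (4/3)"
        using assms(2) by (simp add: prof_def algebra_simps)
      moreover have "x0 + s *\<^sub>R e \<in> \<Omega> \<inter> ball x0 r"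
        using ray(1) ray(3)[of s] s by (auto simp: dist_norm)
      moreover have "M * (- s)\<^sup>2 \<le> prof_const * (- s) powr (4/3)"
        using s \<open>M > 0\<close> prof_const_pos by (intro power2_le_powr_four_thirds) auto
      ultimately show ?thesis
        using r[of "x0 + s *\<^sub>R e"] by simp
    qed
  qed (use \<open>G x0 = 0\<close> \<open>r > 0\<close> \<open>M > 0\<close> dist_bd_pos[OF assms(1)] prof_const_pos
      in \<open>auto intro!: derivative_eq_intros\<close>)
  then show False by (simp add: M_def)
qed

lemma visc_sol_phi: "visc_sol \<Omega> phi"
proof -
  have "continuous_on \<Omega> phi"
    unfolding prof_def
    by (intro continuous_intros continuous_on_powr' continuous_on_dist_bd)
      (use dist_bd_le_inradius_domain in auto)
  moreover have "d x < \<rho> \<or> d x = \<rho>" if "x \<in> \<Omega>" for x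
    using dist_bd_le_inradius_domain[OF that] by auto
  ultimately show ?thesis
    unfolding visc_sol_def visc_subsol_def visc_supersol_def
    using phi_subsol_regular phi_subsol_ridge phi_supersol_regular phi_not_touched_above_at_ridge
    by metis
qed

lemma dirichlet_visc_sol_phi: "dirichlet_visc_sol \<Omega> phi"
proof -
  have "continuous_on (closure \<Omega>) phi"
    unfolding prof_def
    by (intro continuous_intros continuous_on_powr' continuous_on_dist_bd)
      (use dist_bd_le_inradius in auto)
  then show ?thesis
    unfolding dirichlet_visc_sol_def using visc_sol_phi dist_bd_frontier by simp
qed

end

section \<open>Rays to the high ridge and uniqueness\<close>

context ridge_domain
begin

lemma ray_extends:
  assumes "z \<in> \<Omega>" "d z < \<rho>" "y \<in> frontier \<Omega>" "d z = dist z y"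
  obtains s where "s > 0" and "y + ((d z + s) / d z) *\<^sub>R (z - y) \<in> \<Omega>"
    and "d (y + ((d z + s) / d z) *\<^sub>R (z - y)) = d z + s"
proof -
  have "z \<notin> cut_locus \<Omega>"
    using cut_locus_subset_high_ridge assms(2) unfolding high_ridge_def by auto
  then obtain r where "r > 0" and r: "ball z r \<inter> cut_locus \<Omega> = {}"
    using open_contains_ball[of "- cut_locus \<Omega>"] by (force simp: cut_locus_def open_Compl)
  have "d z > 0" using dist_bd_pos[OF assms(1)] .
  define s where "s = min (r / 2) (d z / 2)"
  have "s > 0" using \<open>r > 0\<close> \<open>d z > 0\<close> by (simp add: s_def)
  have sub: "cball z s \<subseteq> \<Omega>"
    using ball_dist_bd_subset[OF assms(1)] \<open>d z > 0\<close> by (force simp: s_def)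
  have "d differentiable (at w)" if "w \<in> cball z s" for w
  proof -
    have "w \<in> ball z r" using that \<open>r > 0\<close> by (simp add: s_def)
    then have "w \<notin> singular_set \<Omega>"
      using r closure_subset[of "singular_set \<Omega>"] by (auto simp: cut_locus_def)
    then show ?thesis using sub that unfolding singular_set_def by auto
  qed
  then obtain w where "w \<in> cball z s" and fixed: "w = z + (s / d w) *\<^sub>R (w - nearest_point w)"
    using segment_to_nearest_point_through[OF \<open>s > 0\<close> sub] by blast
  define q where "q = nearest_point w"
  have "w \<in> \<Omega>" "d w > 0" using \<open>w \<in> cball z s\<close> sub dist_bd_pos by auto
  have "d w \<ge> d z - s"
    using dist_bd_lipschitz[of z w] \<open>w \<in> cball z s\<close> by simp
  then have "s / d w \<le> 1" using \<open>d w > 0\<close> by (simp add: s_def divide_le_eq)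
  have zeq: "z = w + (s / d w) *\<^sub>R (q - w)"
    using fixed by (simp add: q_def algebra_simps)
  have "d z = (1 - s / d w) * d w"
    unfolding zeq using dist_bd_segment[OF nearest_point] \<open>s > 0\<close> \<open>s / d w \<le> 1\<close> \<open>d w > 0\<close>
    by (simp add: q_def)
  then have dw: "d w = d z + s" using \<open>d w > 0\<close> by (simp add: algebra_simps)
  have "z - q = (1 - s / d w) *\<^sub>R (w - q)"
    using zeq by (simp add: algebra_simps)
  then have "dist z q = (1 - s / d w) * d w"
    using \<open>s / d w \<le> 1\<close> nearest_point(2)[of w] by (simp add: dist_norm q_def)
  then have "q = y"
    using nearest_frontier_point_unique[OF assms(1) _ nearest_point(1) _ assms(3,4)]
      \<open>d z = (1 - s / d w) * d w\<close> \<open>\<And>w. w \<in> cball z s \<Longrightarrow> d differentiable (at w)\<close> \<open>s > 0\<close>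
    by (simp add: q_def)
  have "w = y + ((d z + s) / d z) *\<^sub>R (z - y)"
  proof -
    have "1 - s / d w = d z / d w" using dw \<open>d w > 0\<close> by (simp add: field_simps)
    then have "z - y = (d z / d w) *\<^sub>R (w - y)"
      using \<open>z - q = _\<close> \<open>q = y\<close> by simp
    then have "((d z + s) / d z) *\<^sub>R (z - y) = w - y"
      using dw \<open>d w > 0\<close> \<open>d z > 0\<close> by simp
    then show ?thesis by (simp add: algebra_simps)
  qed
  then show thesis using that \<open>s > 0\<close> \<open>w \<in> \<Omega>\<close> dw by auto
qed

lemma ray_prolongs:
  assumes "x0 \<in> \<Omega>" "y \<in> frontier \<Omega>" "d x0 = dist x0 y"
    and "t \<ge> 1" "d (y + t *\<^sub>R (x0 - y)) = t * d x0" "t * d x0 < \<rho>"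
  obtains t' where "t' > t" "y + t' *\<^sub>R (x0 - y) \<in> \<Omega>" "d (y + t' *\<^sub>R (x0 - y)) = t' * d x0"
proof -
  define z where "z = y + t *\<^sub>R (x0 - y)"
  have "d x0 > 0" using dist_bd_pos[OF assms(1)] .
  have "z \<in> \<Omega>" using ray_point_in_domain[OF assms(1-5)] by (simp add: z_def)
  have "dist z y = t * d x0" using assms(3,4) by (simp add: z_def dist_norm)
  then obtain s where "s > 0" and in\<Omega>: "y + ((d z + s) / d z) *\<^sub>R (z - y) \<in> \<Omega>"
    and ds: "d (y + ((d z + s) / d z) *\<^sub>R (z - y)) = d z + s"
    using ray_extends[OF \<open>z \<in> \<Omega>\<close> _ assms(2)] assms(5,6) by (auto simp: z_def)
  have "((t * d x0 + s) / (t * d x0)) * t = t + s / d x0"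
    using assms(4) \<open>d x0 > 0\<close> by (simp add: field_simps)
  moreover have dz: "d z = t * d x0" using assms(5) by (simp add: z_def)
  ultimately have eq: "y + ((d z + s) / d z) *\<^sub>R (z - y) = y + (t + s / d x0) *\<^sub>R (x0 - y)"
    by (simp add: z_def)
  show thesis
  proof
    show "t < t + s / d x0" using divide_pos_pos[OF \<open>s > 0\<close> \<open>d x0 > 0\<close>] by simp
    show "y + (t + s / d x0) *\<^sub>R (x0 - y) \<in> \<Omega>" using in\<Omega> unfolding eq .
    have "d (y + (t + s / d x0) *\<^sub>R (x0 - y)) = t * d x0 + s" using ds unfolding eq by (simp only: dz)
    also have "\<dots> = (t + s / d x0) * d x0" using \<open>d x0 > 0\<close> by (simp add: field_simps)
    finally show "d (y + (t + s / d x0) *\<^sub>R (x0 - y)) = (t + s / d x0) * d x0" .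
  qed
qed

text \<open>The ray from a nearest boundary point through \<open>x0\<close> stays a ray of steepest ascent of \<open>d\<close>
  until it reaches the high ridge: off the cut locus it can always be prolonged.\<close>
lemma ray_reaches_high_ridge:
  assumes "x0 \<in> \<Omega>"
  obtains z where "z \<in> \<Omega>" "d z = \<rho>" "dist x0 z = \<rho> - d x0"
proof -
  obtain y where y: "y \<in> frontier \<Omega>" "d x0 = dist x0 y" by (rule nearest_frontier_point)
  define d0 where "d0 = d x0"
  have "d0 > 0" using dist_bd_pos[OF assms] by (simp add: d0_def)
  define P where "P = (\<lambda>t. y + t *\<^sub>R (x0 - y))"
  define S where "S = {t. 1 \<le> t \<and> t * d0 \<le> \<rho> \<and> d (P t) = t * d0}"
  have "1 \<in> S" using dist_bd_le_inradius_domain[OF assms] by (simp add: S_def P_def d0_def)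
  have "bdd_above S"
    using \<open>d0 > 0\<close> by (intro bdd_aboveI[of _ "\<rho> / d0"]) (auto simp: S_def pos_le_divide_eq)
  have "closed S"
  proof -
    have "continuous_on UNIV (\<lambda>t. d (P t))"
      unfolding P_def by (intro continuous_on_compose2[OF continuous_on_dist_bd] continuous_intros) auto
    then have "closed {t. d (P t) = t * d0}"
      by (intro closed_Collect_eq continuous_intros) auto
    moreover have "S = {1..} \<inter> {t. t * d0 \<le> \<rho>} \<inter> {t. d (P t) = t * d0}"
      by (auto simp: S_def)
    ultimately show ?thesis
      by (auto intro!: closed_Int closed_Collect_le continuous_intros)
  qed
  define T where "T = Sup S"
  have "T \<in> S" unfolding T_def using \<open>closed S\<close> \<open>1 \<in> S\<close> \<open>bdd_above S\<close> by (intro closed_contains_Sup) auto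
  then have T: "1 \<le> T" "T * d0 \<le> \<rho>" "d (P T) = T * d0" by (auto simp: S_def)
  have "T * d0 = \<rho>"
  proof (rule ccontr)
    assume "T * d0 \<noteq> \<rho>"
    then obtain t' where "t' > T" "P t' \<in> \<Omega>" "d (P t') = t' * d0"
      using ray_prolongs[OF assms y, of T] T by (auto simp: P_def d0_def)
    then have "t' \<in> S"
      using \<open>1 \<le> T\<close> dist_bd_le_inradius_domain[of "P t'"] by (simp add: S_def)
    then have "t' \<le> T" unfolding T_def using \<open>bdd_above S\<close> by (rule cSup_upper)
    then show False using \<open>t' > T\<close> by simp
  qed
  moreover have "P T \<in> \<Omega>"
    using ray_point_in_domain[OF assms y] T by (simp add: P_def d0_def)
  moreover have "dist x0 (P T) = (T - 1) * d0"
  proof -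
    have "P T - x0 = (T - 1) *\<^sub>R (x0 - y)" by (simp add: P_def algebra_simps)
    then have "norm (P T - x0) = (T - 1) * d0"
      using T y(2) by (simp add: dist_norm d0_def)
    then show ?thesis by (simp add: dist_norm norm_minus_commute)
  qed
  ultimately show thesis
    using that[of "P T"] T by (simp add: d0_def algebra_simps)
qed

lemma dirichlet_ge_phi:
  assumes u: "dirichlet_visc_sol \<Omega> u" and "x0 \<in> \<Omega>"
  shows "prof \<rho> (d x0) \<le> u x0"
proof -
  obtain z where "z \<in> \<Omega>" "d z = \<rho>" and xz: "dist x0 z = \<rho> - d x0"
    using ray_reaches_high_ridge[OF assms(2)] by blast
  have zball: "ball z \<rho> \<subseteq> \<Omega>" using ball_dist_bd_subset[OF \<open>z \<in> \<Omega>\<close>] \<open>d z = \<rho>\<close> by simp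
  define d0 where "d0 = d x0"
  have "d0 > 0" "d0 \<le> \<rho>"
    using dist_bd_pos[OF assms(2)] dist_bd_le_inradius_domain[OF assms(2)] by (auto simp: d0_def)
  have bound: "(1 - \<epsilon>) * prof (\<rho> - \<epsilon>) (d0 - 2 * \<epsilon>) \<le> u x0"
    if "0 < \<epsilon>" "\<epsilon> < min 1 (d0 / 2)" for \<epsilon>
  proof -
    have "\<exists>c\<in>ball z \<epsilon>. \<forall>x\<in>cball c (\<rho> - \<epsilon>). (1 - \<epsilon>) * prof (\<rho> - \<epsilon>) (\<rho> - \<epsilon> - norm (x - c)) \<le> u x"
      by (rule radial_barrier[OF u zball]) (use that \<open>d0 \<le> \<rho>\<close> in auto)
    then obtain c where "c \<in> ball z \<epsilon>"
      and barrier: "\<And>x. x \<in> cball c (\<rho> - \<epsilon>) \<Longrightarrow> (1 - \<epsilon>) * prof (\<rho> - \<epsilon>) (\<rho> - \<epsilon> - norm (x - c)) \<le> u x"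
      by blast
    have "norm (x0 - c) < \<rho> - d0 + \<epsilon>"
      using dist_triangle[of x0 c z] xz \<open>c \<in> ball z \<epsilon>\<close> by (simp add: d0_def dist_norm dist_commute)
    then have "x0 \<in> cball c (\<rho> - \<epsilon>)" and "d0 - 2 * \<epsilon> \<le> \<rho> - \<epsilon> - norm (x0 - c)"
      using that by (auto simp: dist_norm norm_minus_commute)
    then have "prof (\<rho> - \<epsilon>) (d0 - 2 * \<epsilon>) \<le> prof (\<rho> - \<epsilon>) (\<rho> - \<epsilon> - norm (x0 - c))"
      by (intro prof_mono) auto
    then have "(1 - \<epsilon>) * prof (\<rho> - \<epsilon>) (d0 - 2 * \<epsilon>)
        \<le> (1 - \<epsilon>) * prof (\<rho> - \<epsilon>) (\<rho> - \<epsilon> - norm (x0 - c))"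
      using that by (intro mult_left_mono) auto
    then show ?thesis
      using barrier[OF \<open>x0 \<in> cball c (\<rho> - \<epsilon>)\<close>] by linarith
  qed
  show ?thesis
  proof (rule tendsto_upperbound)
    have "((\<lambda>\<epsilon>. (1 - \<epsilon>) * prof (\<rho> - \<epsilon>) (d0 - 2 * \<epsilon>)) \<longlongrightarrow> (1 - 0) * prof (\<rho> - 0) (d0 - 2 * 0))
        (at_right 0)"
    proof (intro tendsto_intros tendsto_prof)
      show "\<forall>\<^sub>F \<epsilon> in at_right 0. d0 - 2 * \<epsilon> \<le> \<rho> - \<epsilon>"
        using \<open>d0 \<le> \<rho>\<close> by (auto simp: eventually_at_right_field intro: exI[of _ 1])
    qed (use inradius_pos in auto)
    then show "((\<lambda>\<epsilon>. (1 - \<epsilon>) * prof (\<rho> - \<epsilon>) (d0 - 2 * \<epsilon>)) \<longlongrightarrow> prof \<rho> (d x0)) (at_right 0)"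
      by (simp add: d0_def)
    show "\<forall>\<^sub>F \<epsilon> in at_right 0. (1 - \<epsilon>) * prof (\<rho> - \<epsilon>) (d0 - 2 * \<epsilon>) \<le> u x0"
      unfolding eventually_at_right_field using \<open>d0 > 0\<close> bound
      by (intro exI[of _ "min 1 (d0 / 2)"]) auto
  qed simp
qed

end

theorem theorem2:
  fixes \<Omega> :: "(real ^ 'n) set"
  assumes "open \<Omega>" and "bounded \<Omega>" and "connected \<Omega>" and "\<Omega> \<noteq> {}"
    and "cut_locus \<Omega> = high_ridge \<Omega>"
  shows "dirichlet_visc_sol \<Omega> (phi_Omega \<Omega>) \<and>
         (\<forall>u. dirichlet_visc_sol \<Omega> u \<longrightarrow> (\<forall>x\<in>closure \<Omega>. u x = phi_Omega \<Omega> x)) \<and>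
         (C1_boundary \<Omega> \<longrightarrow>
            overdet_visc_sol \<Omega> (phi_Omega \<Omega>) ((3 * inradius \<Omega>) powr (1/3)) \<and>
            (\<forall>u. overdet_visc_sol \<Omega> u ((3 * inradius \<Omega>) powr (1/3)) \<longrightarrow>
                 (\<forall>x\<in>closure \<Omega>. u x = phi_Omega \<Omega> x)))"
proof -
  interpret ridge_domain \<Omega>
    by unfold_locales (use assms in auto)
  have unique: "u x = phi_Omega \<Omega> x" if "dirichlet_visc_sol \<Omega> u" "x \<in> closure \<Omega>" for u x
  proof (cases "x \<in> \<Omega>")
    case True
    then show ?thesis
      using dirichlet_le_phi[OF that] dirichlet_ge_phi[OF that(1) True] by (simp add: phi_Omega_eq)
  next
    case False
    then have "x \<in> frontier \<Omega>" using that(2) closure_minus_frontier by blast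
    then show ?thesis
      using that(1) dist_bd_frontier unfolding dirichlet_visc_sol_def by (simp add: phi_Omega_eq)
  qed
  have "normal_deriv_eq \<Omega> (phi_Omega \<Omega>) ((3 * \<rho>) powr (1/3))"
    unfolding normal_deriv_eq_def phi_Omega_eq
    using normal_derivative_prof_dist_bd inradius_pos by blast
  then show ?thesis
    using dirichlet_visc_sol_phi unique unfolding overdet_visc_sol_def phi_Omega_eq by blast
qed

end
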